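(* Let $n\ge 1$ and $d\ge 2$ be integers. For every $n$-step process tensor Choi state $\Upsilon$ (as defined in the context), the non-Markovianity satisfies $\mathrm{N}\le 2(n-1)\ln d$, and this value is attained: the maximum of $\mathrm{N}$ over all $n$-step process tensors is $2(n-1)\ln d$.
   Context: An $n$-step process tensor with system dimension $d$ is represented by its Choi state $\Upsilon$, a density operator on $\mathcal{H}_{\mathrm{i}_0}\otimes\mathcal{H}_{\mathrm{o}_1}\otimes\cdots\otimes\mathcal{H}_{\mathrm{i}_{n-1}}\otimes\mathcal{H}_{\mathrm{o}_n}$ (each factor of dimension $d$) satisfying: for all $1\le j\le n$, $\mathrm{tr}_{\mathrm{o}_j}[\Upsilon_{1:j}]=\Upsilon_{1:j-1}\otimes\mathbb{I}_{\mathrm{i}_{j-1}}/d$, where $\Upsilon_{1:j}$ is the partial trace of $\Upsilon$ over $\mathrm{i}_j,\mathrm{o}_{j+1},\dots,\mathrm{i}_{n-1},\mathrm{o}_n$ (with $\Upsilon_{1:n}=\Upsilon$, $\Upsilon_{1:0}=1$). With von Neumann entropies (natural log), $S_j$ the entropy of the marginal of $\Upsilon$ on $\mathrm{i}_{j-1}\mathrm{o}_j$ and $S_{1:n}=S(\Upsilon)$, the non-Markovianity is $\mathrm{N}=\sum_{j=1}^n S_j - S_{1:n}$. *)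

theory Defs
  imports "Jordan_Normal_Form.Schur_Decomposition" "HOL-Computational_Algebra.Polynomial"
begin

text \<open>The Hilbert space of m qudits (each of dimension d) is C^(d^m); a basis
index i < d^m is read in little-endian mixed radix: the digit of factor k (0-based) is
(i div d^k) mod d. For a process tensor, the 2n factors are ordered
i_0, o_1, i_1, o_2, ..., i_(n-1), o_n, i.e. factor 2(j-1) is i_(j-1) and factor 2j-1 is o_j.\<close>

definition density_op :: "nat \<Rightarrow> complex mat \<Rightarrow> bool" where
  "density_op N A \<longleftrightarrow> A \<in> carrier_mat N N \<and> mat_adjoint A = A
     \<and> (\<forall>v \<in> carrier_vec N. 0 \<le> Re (conjugate v \<bullet> (A *\<^sub>v v)))
     \<and> (\<Sum>i < N. A $$ (i, i)) = 1"

text \<open>Marginal (partial trace over all other factors) of an operator A on m factors of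
dimension d, onto the l contiguous factors k, ..., k+l-1.\<close>
definition marg :: "nat \<Rightarrow> nat \<Rightarrow> nat \<Rightarrow> nat \<Rightarrow> complex mat \<Rightarrow> complex mat" where
  "marg d m k l A = mat (d ^ l) (d ^ l) (\<lambda>(a, b).
      \<Sum>x < d ^ k. \<Sum>y < d ^ (m - k - l).
        A $$ (x + d ^ k * a + d ^ (k + l) * y, x + d ^ k * b + d ^ (k + l) * y))"

text \<open>B \<otimes> I/d, where B acts on the first p factors and the identity acts on a new factor p.\<close>
definition tensor_maxmixed :: "nat \<Rightarrow> nat \<Rightarrow> complex mat \<Rightarrow> complex mat" where
  "tensor_maxmixed d p B = mat (d ^ (p + 1)) (d ^ (p + 1)) (\<lambda>(a, b).
      if a div d ^ p = b div d ^ p then B $$ (a mod d ^ p, b mod d ^ p) / of_nat d else 0)"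

text \<open>Upsilon_(1:j) is the marginal on the first 2j factors; the partial trace of it over o_j
 is the marginal on the first 2j-1 factors; Upsilon_(1:0) = 1 is the 1x1 marginal.\<close>
definition process_tensor :: "nat \<Rightarrow> nat \<Rightarrow> complex mat \<Rightarrow> bool" where
  "process_tensor d n U \<longleftrightarrow> density_op (d ^ (2 * n)) U \<and>
     (\<forall>j \<in> {1..n}. marg d (2 * n) 0 (2 * j - 1) U
                     = tensor_maxmixed d (2 * j - 2) (marg d (2 * n) 0 (2 * j - 2) U))"

text \<open>Von Neumann entropy (natural log): - sum of lambda ln lambda over the eigenvalues
(with algebraic multiplicity, i.e. roots of the characteristic polynomial); 0 ln 0 = 0.\<close>
definition vn_entropy :: "complex mat \<Rightarrow> real" where
  "vn_entropy A = - sum_mset (image_mset (\<lambda>z. Re z * ln (Re z)) (proots (char_poly A)))"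

definition non_markovianity :: "nat \<Rightarrow> nat \<Rightarrow> complex mat \<Rightarrow> real" where
  "non_markovianity d n U =
     (\<Sum>j = 1..n. vn_entropy (marg d (2 * n) (2 * j - 2) 2 U)) - vn_entropy U"

end

theory Submission
  imports Defs
begin

text \<open>Appending a maximally mixed factor of dimension d raises the von Neumann entropy by exactly
  ln d, while tracing out a factor of dimension d lowers it by at most ln d. The causality
  constraint says that tracing o_j out of \<Upsilon>_(1:j) gives \<Upsilon>_(1:j-1) \<otimes> I/d, so the entropies of
  the prefixes \<Upsilon>_(1:j) are nondecreasing in j and S(\<Upsilon>) \<ge> S(\<Upsilon>_(1:1)) = S_1. Bounding each of
  the other n - 1 pair entropies by ln (d^2) gives N \<le> 2 (n - 1) ln d. The partial-trace bound
  is classical at heart: expanding both states in eigenbases yields a joint distribution whose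
  marginals are the two spectra, and ln x \<le> x - 1 together with Bessel's inequality gives
  H(a) \<le> H(l) + ln d. Equality is attained by a process with a two-step memory that delivers
  each input i_(j-1) at the output o_(j+1): all pair marginals are maximally mixed while
  S(\<Upsilon>) = 2 ln d.\<close>

subsection \<open>Unitary matrices\<close>

lemma mat_adjoint_dim [simp]:
  "dim_row (mat_adjoint A) = dim_col A" "dim_col (mat_adjoint A) = dim_row A"
  by (simp_all add: mat_adjoint_def)

lemma mat_adjoint_carrier [simp]: "A \<in> carrier_mat n m \<Longrightarrow> mat_adjoint A \<in> carrier_mat m n"
  by (intro carrier_matI) (auto dest: carrier_matD)

lemma mat_adjoint_index [simp]:
  fixes A :: "complex mat"
  shows "i < dim_col A \<Longrightarrow> j < dim_row A \<Longrightarrow> mat_adjoint A $$ (i, j) = cnj (A $$ (j, i))"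
  by (simp add: mat_adjoint_def mat_of_rows_index)

lemma mat_adjoint_adjoint [simp]: "mat_adjoint (mat_adjoint A) = (A :: complex mat)"
  by (rule eq_matI) auto

lemma index_mult_mat_sum:
  assumes "A \<in> carrier_mat n m" "B \<in> carrier_mat m p" "i < n" "j < p"
  shows "(A * B) $$ (i, j) = (\<Sum>k<m. A $$ (i, k) * B $$ (k, j))"
  using assms by (simp add: scalar_prod_def atLeast0LessThan)

lemma mat_adjoint_mult:
  fixes A B :: "complex mat"
  assumes A: "A \<in> carrier_mat n m" and B: "B \<in> carrier_mat m p"
  shows "mat_adjoint (A * B) = mat_adjoint B * mat_adjoint A"
proof (rule eq_matI)
  fix i j assume "i < dim_row (mat_adjoint B * mat_adjoint A)" "j < dim_col (mat_adjoint B * mat_adjoint A)"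
  then have ij: "i < p" "j < n" using assms by auto
  have "mat_adjoint (A * B) $$ (i, j) = cnj ((A * B) $$ (j, i))"
    using ij A B by simp
  also have "\<dots> = (\<Sum>k<m. cnj (A $$ (j, k)) * cnj (B $$ (k, i)))"
    by (simp add: index_mult_mat_sum[OF A B ij(2) ij(1)] cnj_sum)
  also have "\<dots> = (mat_adjoint B * mat_adjoint A) $$ (i, j)"
    using ij A B by (subst index_mult_mat_sum[of _ p m _ n], auto simp: mult.commute)
  finally show "mat_adjoint (A * B) $$ (i, j) = (mat_adjoint B * mat_adjoint A) $$ (i, j)" .
qed (use assms in auto)

definition unitary :: "nat \<Rightarrow> complex mat \<Rightarrow> bool" where
  "unitary n Q \<longleftrightarrow> Q \<in> carrier_mat n n \<and> mat_adjoint Q * Q = 1\<^sub>m n"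

lemma unitaryD:
  assumes "unitary n Q"
  shows "Q \<in> carrier_mat n n" "mat_adjoint Q * Q = 1\<^sub>m n" "Q * mat_adjoint Q = 1\<^sub>m n"
  using assms mat_mult_left_right_inverse[of "mat_adjoint Q" n Q]
  by (auto simp: unitary_def)

lemma unitary_cancel_left:
  assumes "unitary n Q" "B \<in> carrier_mat n m"
  shows "mat_adjoint Q * (Q * B) = B"
  using assms unitaryD[OF assms(1)]
  by (simp add: assoc_mult_mat[of "mat_adjoint Q" n n Q n B m, symmetric])

lemma unitary_cols_orthonormal:
  assumes "unitary n Q" "i < n" "j < n"
  shows "(\<Sum>k<n. cnj (Q $$ (k, i)) * Q $$ (k, j)) = (if i = j then 1 else 0)"
proof -
  note Q = unitaryD[OF assms(1)]
  have "(\<Sum>k<n. cnj (Q $$ (k, i)) * Q $$ (k, j)) = (mat_adjoint Q * Q) $$ (i, j)"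
    using Q assms by (subst index_mult_mat_sum[of _ n n _ n], auto)
  then show ?thesis using Q assms by simp
qed

lemma unitary_rows_orthonormal:
  assumes "unitary n Q" "i < n" "j < n"
  shows "(\<Sum>k<n. Q $$ (i, k) * cnj (Q $$ (j, k))) = (if i = j then 1 else 0)"
proof -
  note Q = unitaryD[OF assms(1)]
  have "(\<Sum>k<n. Q $$ (i, k) * cnj (Q $$ (j, k))) = (Q * mat_adjoint Q) $$ (i, j)"
    using Q assms by (subst index_mult_mat_sum[of _ n n _ n], auto)
  then show ?thesis using Q assms by simp
qed

lemma unitary_mult:
  assumes P: "unitary n P" and Q: "unitary n Q"
  shows "unitary n (P * Q)"
proof -
  have "mat_adjoint (P * Q) * (P * Q) = mat_adjoint Q * (mat_adjoint P * (P * Q))"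
    using unitaryD[OF P] unitaryD[OF Q]
    by (simp add: mat_adjoint_mult[of _ n n] assoc_mult_mat[of _ n n _ n _ n])
  then show ?thesis
    using unitaryD[OF P] unitaryD[OF Q] unitary_cancel_left[OF P, of Q n]
    by (simp add: unitary_def)
qed

lemma unitary_adjoint:
  assumes "unitary n Q"
  shows "unitary n (mat_adjoint Q)"
  using unitaryD[OF assms] by (simp add: unitary_def)

definition diag_real_mat :: "nat \<Rightarrow> (nat \<Rightarrow> real) \<Rightarrow> complex mat" where
  "diag_real_mat n l = mat n n (\<lambda>(i, j). if i = j then complex_of_real (l i) else 0)"

lemma diag_real_mat_carrier [simp]: "diag_real_mat n l \<in> carrier_mat n n"
  by (simp add: diag_real_mat_def)

lemma index_conj_diag:
  assumes Q: "Q \<in> carrier_mat n n" and i: "i < n" and j: "j < n"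
  shows "(Q * diag_real_mat n l * mat_adjoint Q) $$ (i, j)
       = (\<Sum>k<n. Q $$ (i, k) * of_real (l k) * cnj (Q $$ (j, k)))"
proof -
  have "(Q * diag_real_mat n l) $$ (i, k) = Q $$ (i, k) * of_real (l k)" if k: "k < n" for k
  proof -
    have "(Q * diag_real_mat n l) $$ (i, k) = (\<Sum>m<n. Q $$ (i, m) * diag_real_mat n l $$ (m, k))"
      using k by (intro index_mult_mat_sum[OF Q diag_real_mat_carrier i])
    also have "\<dots> = (\<Sum>m<n. if m = k then Q $$ (i, k) * of_real (l k) else 0)"
      using k by (intro sum.cong) (auto simp: diag_real_mat_def)
    finally show ?thesis using k by simp
  qed
  then show ?thesis
    using Q i j by (subst index_mult_mat_sum[of _ n n _ n]) auto
qed

lemma conj_by_product: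
  fixes P Q D :: "complex mat"
  assumes "P \<in> carrier_mat n n" "Q \<in> carrier_mat n n" "D \<in> carrier_mat n n"
  shows "P * (Q * D * mat_adjoint Q) * mat_adjoint P = (P * Q) * D * mat_adjoint (P * Q)"
proof -
  have QD: "Q * D \<in> carrier_mat n n" and Qa: "mat_adjoint Q \<in> carrier_mat n n"
    and Pa: "mat_adjoint P \<in> carrier_mat n n" using assms by simp_all
  have QaPa: "mat_adjoint Q * mat_adjoint P \<in> carrier_mat n n" using Qa Pa by simp
  have QDQa: "Q * D * mat_adjoint Q \<in> carrier_mat n n" using QD Qa by simp
  have "(P * Q) * D * mat_adjoint (P * Q) = P * (Q * D) * (mat_adjoint Q * mat_adjoint P)"
    using assms by (simp add: mat_adjoint_mult[of P n n Q n])
  also have "\<dots> = P * ((Q * D) * (mat_adjoint Q * mat_adjoint P))"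
    by (rule assoc_mult_mat[OF assms(1) QD QaPa])
  also have "(Q * D) * (mat_adjoint Q * mat_adjoint P) = (Q * D * mat_adjoint Q) * mat_adjoint P"
    by (rule assoc_mult_mat[OF QD Qa Pa, symmetric])
  also have "P * \<dots> = P * (Q * D * mat_adjoint Q) * mat_adjoint P"
    by (rule assoc_mult_mat[OF assms(1) QDQa Pa, symmetric])
  finally show ?thesis by simp
qed

lemma unitary_conj_cancel:
  assumes Q: "unitary n Q" and D: "D \<in> carrier_mat n n" and A: "A = Q * D * mat_adjoint Q"
  shows "mat_adjoint Q * A * Q = D"
proof -
  have "mat_adjoint Q * A * Q = mat_adjoint Q * (Q * (D * (mat_adjoint Q * Q)))"
    unfolding A using unitaryD[OF Q] D by (simp add: assoc_mult_mat[of _ n n _ n _ n])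
  then show ?thesis using unitaryD[OF Q] D unitary_cancel_left[OF Q D] by simp
qed

lemma hermitian_index:
  fixes A :: "complex mat"
  assumes "A \<in> carrier_mat n n" "mat_adjoint A = A" "i < n" "j < n"
  shows "A $$ (i, j) = cnj (A $$ (j, i))"
proof -
  have "mat_adjoint A $$ (i, j) = cnj (A $$ (j, i))" using assms(1,3,4) by simp
  then show ?thesis using assms(2) by simp
qed

lemma hermitian_unitary_conj:
  fixes A W :: "complex mat"
  assumes A: "A \<in> carrier_mat n n" and herm: "mat_adjoint A = A" and W: "W \<in> carrier_mat n n"
  shows "mat_adjoint (mat_adjoint W * A * W) = mat_adjoint W * A * W"
proof -
  have "mat_adjoint (mat_adjoint W * A * W) = mat_adjoint W * mat_adjoint (mat_adjoint W * A)"
    using A W by (intro mat_adjoint_mult[of _ n n]) auto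
  also have "mat_adjoint (mat_adjoint W * A) = A * W"
    using A W herm by (subst mat_adjoint_mult[of _ n n _ n]) auto
  finally show ?thesis using A W by (simp add: assoc_mult_mat[of _ n n _ n _ n])
qed

subsection \<open>Spectral theorem for Hermitian matrices\<close>

definition normalized_cols :: "nat \<Rightarrow> complex vec list \<Rightarrow> complex mat" where
  "normalized_cols n ws = mat n n (\<lambda>(k, i). complex_of_real (1 / sqrt (Re (ws ! i \<bullet>c ws ! i))) * ws ! i $ k)"

lemma unitary_normalized_cols:
  assumes orth: "corthogonal ws" and ws: "set ws \<subseteq> carrier_vec n" and len: "length ws = n"
  shows "unitary n (normalized_cols n ws)"
proof -
  define c where "c i = complex_of_real (1 / sqrt (Re (ws ! i \<bullet>c ws ! i)))" for i
  define W where "W = normalized_cols n ws"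
  have W: "W \<in> carrier_mat n n" by (simp add: W_def normalized_cols_def)
  have wsi: "ws ! i \<in> carrier_vec n" if "i < n" for i using ws len that by auto
  have "mat_adjoint W * W = 1\<^sub>m n"
  proof (rule eq_matI)
    fix i j assume "i < dim_row (1\<^sub>m n)" "j < dim_col (1\<^sub>m n)"
    then have ij: "i < n" "j < n" by auto
    have "(mat_adjoint W * W) $$ (i, j) = cnj (c i) * c j * (\<Sum>k<n. (ws ! j) $ k * cnj ((ws ! i) $ k))"
      using ij W by (subst index_mult_mat_sum[of _ n n _ n])
        (auto simp: W_def normalized_cols_def c_def sum_distrib_left intro!: sum.cong)
    also have "\<dots> = cnj (c i) * c j * (ws ! j \<bullet>c ws ! i)"
      using wsi[OF ij(1)] by (simp add: scalar_prod_def atLeast0LessThan)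
    also have "\<dots> = 1\<^sub>m n $$ (i, j)"
    proof (cases "i = j")
      case True
      define r where "r = Re (ws ! i \<bullet>c ws ! i)"
      have "ws ! i \<noteq> 0\<^sub>v n" using corthogonalD[OF orth, of i i] len ij by auto
      then have pos: "ws ! i \<bullet>c ws ! i > 0" using wsi[OF ij(1)] by simp
      then have "ws ! i \<bullet>c ws ! i = complex_of_real r" "r > 0"
        by (auto simp: r_def less_complex_def complex_eq_iff)
      moreover have "cnj (c i) * c i * complex_of_real r = complex_of_real (1 / sqrt r * (1 / sqrt r) * r)"
        by (simp only: c_def r_def complex_cnj_complex_of_real of_real_mult)
      ultimately show ?thesis using True ij by (simp add: field_simps)
    next
      case False
      then show ?thesis using corthogonalD[OF orth, of j i] len ij by auto
    qed
    finally show "(mat_adjoint W * W) $$ (i, j) = 1\<^sub>m n $$ (i, j)" .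
  qed (use W in auto)
  then show ?thesis using W by (simp add: unitary_def W_def)
qed

lemma unitary_with_first_column:
  fixes v :: "complex vec"
  assumes v: "v \<in> carrier_vec n" and v0: "v \<noteq> 0\<^sub>v n"
  shows "\<exists>W c. unitary n W \<and> (\<forall>k<n. W $$ (k, 0) = c * v $ k)"
proof -
  interpret cof_vec_space n "TYPE(complex)" .
  define b where "b = basis_completion v"
  from basis_completion[OF v v0, folded b_def]
  have dist_b: "distinct b" and indep: "\<not> lin_dep (set b)" and bc: "set b \<subseteq> carrier_vec n"
    and hdb: "hd b = v" and len_b: "length b = n" by auto
  have n0: "n \<noteq> 0" using v v0 by auto
  from hdb len_b n0 obtain vs where bv: "b = v # vs" by (cases b) auto
  define ws where "ws = gram_schmidt n b"
  from gram_schmidt_result[OF bc dist_b indep ws_def]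
  have ws: "corthogonal ws" "set ws \<subseteq> carrier_vec n" "length ws = n" using len_b by auto
  have "ws ! 0 = v"
    using ws(3) n0 gram_schmidt_hd[OF v, of vs] unfolding ws_def bv by (cases "gram_schmidt n (v # vs)") auto
  then have "\<forall>k<n. normalized_cols n ws $$ (k, 0) = complex_of_real (1 / sqrt (Re (v \<bullet>c v))) * v $ k"
    using n0 by (simp add: normalized_cols_def)
  then show ?thesis using unitary_normalized_cols[OF ws] by blast
qed

lemma unitary_conj_first_column:
  fixes A W :: "complex mat"
  assumes A: "A \<in> carrier_mat m m" and W: "unitary m W"
    and eigen: "\<And>k. k < m \<Longrightarrow> (A * W) $$ (k, 0) = e * W $$ (k, 0)" and i: "i < m"
  shows "(mat_adjoint W * A * W) $$ (i, 0) = (if i = 0 then e else 0)"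
proof -
  note W = unitaryD[OF W]
  have "mat_adjoint W * A * W = mat_adjoint W * (A * W)"
    using A W by (simp add: assoc_mult_mat[of _ m m])
  then have "(mat_adjoint W * A * W) $$ (i, 0) = (\<Sum>k<m. mat_adjoint W $$ (i, k) * (A * W) $$ (k, 0))"
    using A W i by (simp only:) (rule index_mult_mat_sum, auto)
  also have "\<dots> = e * (\<Sum>k<m. mat_adjoint W $$ (i, k) * W $$ (k, 0))"
    by (simp add: eigen sum_distrib_left mult.left_commute)
  also have "\<dots> = e * (mat_adjoint W * W) $$ (i, 0)"
    using W i by (subst index_mult_mat_sum[of _ m m _ m]) auto
  finally show ?thesis using W i by simp
qed

lemma unitary_with_eigen_first_column:
  fixes A :: "complex mat"
  assumes A: "A \<in> carrier_mat (Suc n) (Suc n)"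
  shows "\<exists>W e. unitary (Suc n) W \<and> (\<forall>k<Suc n. (A * W) $$ (k, 0) = e * W $$ (k, 0))"
proof -
  obtain es where "char_poly A = (\<Prod>a\<leftarrow>es. [:- a, 1:])" "length es = Suc n"
    using char_poly_factorized[OF A] by auto
  then obtain e where "poly (char_poly A) e = 0" by (cases es) auto
  then have "eigenvalue A e" using eigenvalue_root_char_poly[OF A] by simp
  then have "eigenvector A (find_eigenvector A e) e" by (rule find_eigenvector[OF A])
  then obtain v where v: "v \<in> carrier_vec (Suc n)" "v \<noteq> 0\<^sub>v (Suc n)" and Av: "A *\<^sub>v v = e \<cdot>\<^sub>v v"
    using A unfolding eigenvector_def by auto
  obtain W c where W: "unitary (Suc n) W" and Wc: "\<forall>k<Suc n. W $$ (k, 0) = c * v $ k"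
    using unitary_with_first_column[OF v] by blast
  have col: "col W 0 = c \<cdot>\<^sub>v v" using Wc unitaryD(1)[OF W] v by (intro eq_vecI) auto
  have "(A * W) $$ (k, 0) = e * W $$ (k, 0)" if k: "k < Suc n" for k
  proof -
    have "(A * W) $$ (k, 0) = (A *\<^sub>v col W 0) $ k" using A unitaryD(1)[OF W] k by simp
    also have "\<dots> = c * e * v $ k" unfolding col mult_mat_vec[OF A v(1)] Av using k v by simp
    finally show ?thesis using Wc k by simp
  qed
  then show ?thesis using W by blast
qed

lemma hermitian_deflation:
  fixes A :: "complex mat"
  assumes A: "A \<in> carrier_mat (Suc n) (Suc n)" and herm: "mat_adjoint A = A"
  shows "\<exists>W r. unitary (Suc n) W \<and> (\<forall>i<Suc n. \<forall>j<Suc n. i = 0 \<or> j = 0 \<longrightarrow>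
            (mat_adjoint W * A * W) $$ (i, j) = (if i = j then complex_of_real r else 0))"
proof -
  obtain W e where W: "unitary (Suc n) W" and eigen: "\<forall>k<Suc n. (A * W) $$ (k, 0) = e * W $$ (k, 0)"
    using unitary_with_eigen_first_column[OF A] by blast
  define B where "B = mat_adjoint W * A * W"
  have B: "B \<in> carrier_mat (Suc n) (Suc n)" using A unitaryD(1)[OF W] unfolding B_def by auto
  have B0: "B $$ (i, 0) = (if i = 0 then e else 0)" if "i < Suc n" for i
    unfolding B_def using unitary_conj_first_column[OF A W _ that] eigen by blast
  have "mat_adjoint B = B"
    unfolding B_def by (rule hermitian_unitary_conj[OF A herm unitaryD(1)[OF W]])
  then have Bsym: "B $$ (j, i) = cnj (B $$ (i, j))" if "i < Suc n" "j < Suc n" for i j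
    by (rule hermitian_index[OF B]) (use that in auto)
  have real: "e = complex_of_real (Re e)"
    using Bsym[of 0 0] B0[of 0] by (simp add: complex_eq_iff)
  have "B $$ (i, j) = (if i = j then complex_of_real (Re e) else 0)"
    if "i < Suc n" "j < Suc n" "i = 0 \<or> j = 0" for i j
    using that B0 Bsym[of j 0] real by (auto simp: complex_eq_iff)
  then show ?thesis using W unfolding B_def by blast
qed

definition direct_sum_one :: "complex mat \<Rightarrow> complex mat" where
  "direct_sum_one Q = mat (Suc (dim_row Q)) (Suc (dim_col Q)) (\<lambda>(i, j).
     if i = 0 \<or> j = 0 then (if i = j then 1 else 0) else Q $$ (i - 1, j - 1))"

lemma unitary_direct_sum_one:
  assumes Q: "unitary n Q"
  shows "unitary (Suc n) (direct_sum_one Q)"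
proof -
  note Q = unitaryD[OF Q] Q
  define Q1 where "Q1 = direct_sum_one Q"
  have Q1: "Q1 \<in> carrier_mat (Suc n) (Suc n)" using Q by (simp add: Q1_def direct_sum_one_def)
  have "mat_adjoint Q1 * Q1 = 1\<^sub>m (Suc n)"
  proof (rule eq_matI)
    fix i j assume "i < dim_row (1\<^sub>m (Suc n))" "j < dim_col (1\<^sub>m (Suc n))"
    then have ij: "i < Suc n" "j < Suc n" by auto
    have "(mat_adjoint Q1 * Q1) $$ (i, j)
        = cnj (Q1 $$ (0, i)) * Q1 $$ (0, j) + (\<Sum>k<n. cnj (Q1 $$ (Suc k, i)) * Q1 $$ (Suc k, j))"
      using ij Q1 by (subst index_mult_mat_sum[of _ "Suc n" "Suc n" _ "Suc n"])
        (auto simp: sum.lessThan_Suc_shift simp del: sum.lessThan_Suc)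
    also have "\<dots> = 1\<^sub>m (Suc n) $$ (i, j)"
    proof (cases "i = 0 \<or> j = 0")
      case True
      then show ?thesis using ij Q by (auto simp: Q1_def direct_sum_one_def)
    next
      case False
      then obtain i' j' where ii: "i = Suc i'" and jj: "j = Suc j'" by (cases i; cases j) auto
      have "(\<Sum>k<n. cnj (Q1 $$ (Suc k, i)) * Q1 $$ (Suc k, j)) = (\<Sum>k<n. cnj (Q $$ (k, i')) * Q $$ (k, j'))"
        using ij ii jj Q by (auto simp: Q1_def direct_sum_one_def intro!: sum.cong)
      then show ?thesis
        using unitary_cols_orthonormal[OF Q(4), of i' j'] ii jj ij Q
        by (auto simp: Q1_def direct_sum_one_def)
    qed
    finally show "(mat_adjoint Q1 * Q1) $$ (i, j) = 1\<^sub>m (Suc n) $$ (i, j)" .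
  qed (use Q1 in auto)
  then show ?thesis using Q1 by (simp add: unitary_def Q1_def)
qed

lemma direct_sum_one_diagonalizes:
  fixes B :: "complex mat"
  assumes B: "B \<in> carrier_mat (Suc n) (Suc n)"
    and corner: "\<And>i j. i < Suc n \<Longrightarrow> j < Suc n \<Longrightarrow> i = 0 \<or> j = 0 \<Longrightarrow>
                   B $$ (i, j) = (if i = j then complex_of_real e else 0)"
    and Q: "Q \<in> carrier_mat n n"
    and lower: "mat n n (\<lambda>(i, j). B $$ (Suc i, Suc j)) = Q * diag_real_mat n l * mat_adjoint Q"
  shows "B = direct_sum_one Q * diag_real_mat (Suc n) (\<lambda>k. if k = 0 then e else l (k - 1))
             * mat_adjoint (direct_sum_one Q)"
    (is "B = ?Q1 * diag_real_mat (Suc n) ?l * _")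
proof (rule eq_matI)
  have Q1: "?Q1 \<in> carrier_mat (Suc n) (Suc n)" using Q by (simp add: direct_sum_one_def)
  fix i j assume "i < dim_row (?Q1 * diag_real_mat (Suc n) ?l * mat_adjoint ?Q1)"
    "j < dim_col (?Q1 * diag_real_mat (Suc n) ?l * mat_adjoint ?Q1)"
  then have ij: "i < Suc n" "j < Suc n" using Q1 by auto
  have "(?Q1 * diag_real_mat (Suc n) ?l * mat_adjoint ?Q1) $$ (i, j)
      = ?Q1 $$ (i, 0) * of_real (?l 0) * cnj (?Q1 $$ (j, 0))
        + (\<Sum>k<n. ?Q1 $$ (i, Suc k) * of_real (?l (Suc k)) * cnj (?Q1 $$ (j, Suc k)))"
    by (simp add: index_conj_diag[OF Q1 ij] sum.lessThan_Suc_shift del: sum.lessThan_Suc)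
  also have "\<dots> = B $$ (i, j)"
  proof (cases "i = 0 \<or> j = 0")
    case True
    then show ?thesis using ij Q corner[OF ij] by (auto simp: direct_sum_one_def)
  next
    case False
    then obtain i' j' where ii: "i = Suc i'" and jj: "j = Suc j'" by (cases i; cases j) auto
    have "(\<Sum>k<n. ?Q1 $$ (i, Suc k) * of_real (?l (Suc k)) * cnj (?Q1 $$ (j, Suc k)))
        = (Q * diag_real_mat n l * mat_adjoint Q) $$ (i', j')"
      using ij ii jj Q by (subst index_conj_diag[OF Q]) (auto simp: direct_sum_one_def)
    then show ?thesis unfolding lower[symmetric] using ij ii jj Q by (simp add: direct_sum_one_def)
  qed
  finally show "B $$ (i, j) = (?Q1 * diag_real_mat (Suc n) ?l * mat_adjoint ?Q1) $$ (i, j)" by simp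
qed (use B Q in \<open>auto simp: direct_sum_one_def\<close>)

lemma hermitian_lower_block:
  fixes B :: "complex mat"
  assumes B: "B \<in> carrier_mat (Suc n) (Suc n)" and herm: "mat_adjoint B = B"
  shows "mat_adjoint (mat n n (\<lambda>(i, j). B $$ (Suc i, Suc j))) = mat n n (\<lambda>(i, j). B $$ (Suc i, Suc j))"
proof (rule eq_matI)
  fix i j assume "i < dim_row (mat n n (\<lambda>(i, j). B $$ (Suc i, Suc j)))"
    "j < dim_col (mat n n (\<lambda>(i, j). B $$ (Suc i, Suc j)))"
  then show "mat_adjoint (mat n n (\<lambda>(i, j). B $$ (Suc i, Suc j))) $$ (i, j)
           = mat n n (\<lambda>(i, j). B $$ (Suc i, Suc j)) $$ (i, j)"
    using hermitian_index[OF B herm, of "Suc i" "Suc j"] by simp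
qed auto

theorem hermitian_spectral_decomposition:
  fixes A :: "complex mat"
  assumes "A \<in> carrier_mat n n" "mat_adjoint A = A"
  shows "\<exists>Q l. unitary n Q \<and> A = Q * diag_real_mat n l * mat_adjoint Q"
  using assms
proof (induction n arbitrary: A)
  case 0
  have "mat_adjoint (1\<^sub>m 0) = (1\<^sub>m 0 :: complex mat)" by (rule eq_matI) auto
  then have "unitary 0 (1\<^sub>m 0)" by (simp add: unitary_def)
  moreover have "A = 1\<^sub>m 0 * diag_real_mat 0 l * mat_adjoint (1\<^sub>m 0)" for l
    using 0 by (intro eq_matI) auto
  ultimately show ?case by blast
next
  case (Suc n A)
  note A = Suc.prems(1)
  obtain W e where W: "unitary (Suc n) W"
    and corner: "\<forall>i<Suc n. \<forall>j<Suc n. i = 0 \<or> j = 0 \<longrightarrow>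
                   (mat_adjoint W * A * W) $$ (i, j) = (if i = j then complex_of_real e else 0)"
    using hermitian_deflation[OF Suc.prems] by blast
  note W = unitaryD[OF W] W
  define B where "B = mat_adjoint W * A * W"
  have B: "B \<in> carrier_mat (Suc n) (Suc n)" using A W unfolding B_def by auto
  have "mat_adjoint B = B"
    unfolding B_def by (rule hermitian_unitary_conj[OF A Suc.prems(2) W(1)])
  then have "mat_adjoint (mat n n (\<lambda>(i, j). B $$ (Suc i, Suc j))) = mat n n (\<lambda>(i, j). B $$ (Suc i, Suc j))"
    by (rule hermitian_lower_block[OF B])
  then obtain Q l where Q: "unitary n Q"
    and lower: "mat n n (\<lambda>(i, j). B $$ (Suc i, Suc j)) = Q * diag_real_mat n l * mat_adjoint Q"
    using Suc.IH[of "mat n n (\<lambda>(i, j). B $$ (Suc i, Suc j))"] by auto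
  define Q1 where "Q1 = direct_sum_one Q"
  define l1 where "l1 k = (if k = 0 then e else l (k - 1))" for k
  have Q1: "unitary (Suc n) Q1" unfolding Q1_def by (rule unitary_direct_sum_one[OF Q])
  have BQ1: "B = Q1 * diag_real_mat (Suc n) l1 * mat_adjoint Q1"
    unfolding Q1_def l1_def
    by (rule direct_sum_one_diagonalizes[OF B _ unitaryD(1)[OF Q] lower])
      (unfold B_def, use corner in blast)
  have "A = W * B * mat_adjoint W"
    using unitary_conj_cancel[OF unitary_adjoint[OF W(4)] A, of B] by (simp add: B_def)
  also have "\<dots> = (W * Q1) * diag_real_mat (Suc n) l1 * mat_adjoint (W * Q1)"
    unfolding BQ1 by (rule conj_by_product[OF W(1) unitaryD(1)[OF Q1] diag_real_mat_carrier])
  finally show ?case using unitary_mult[OF W(4) Q1] by blast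
qed

subsection \<open>Entropy of states\<close>

lemma conj_diag_carrier [simp]:
  "Q \<in> carrier_mat n n \<Longrightarrow> Q * diag_real_mat n l * mat_adjoint Q \<in> carrier_mat n n"
  by (metis mult_carrier_mat diag_real_mat_carrier mat_adjoint_carrier)

lemma proots_linear_factors: "proots (\<Prod>a\<leftarrow>xs. [:- a, 1:]) = mset (xs :: complex list)"
proof (induction xs)
  case (Cons a xs)
  have nz: "(\<Prod>a\<leftarrow>xs. [:- a, 1:]) \<noteq> (0 :: complex poly)" by (auto simp: prod_list_zero_iff)
  have "proots (\<Prod>a\<leftarrow>a # xs. [:- a, 1:]) = proots ([:- a, 1:] * (\<Prod>a\<leftarrow>xs. [:- a, 1:]))" by simp
  also have "\<dots> = proots [:- a, 1:] + proots (\<Prod>a\<leftarrow>xs. [:- a, 1:])"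
    by (rule proots_mult[OF _ nz]) simp
  finally show ?case using Cons.IH by (simp add: proots_linear_factor)
qed simp

lemma proots_char_poly_unitary_conj:
  assumes Q: "unitary n Q" and A: "A = Q * diag_real_mat n l * mat_adjoint Q"
  shows "proots (char_poly A) = mset (map (\<lambda>k. complex_of_real (l k)) [0..<n])"
proof -
  have "similar_mat_wit A (diag_real_mat n l) Q (mat_adjoint Q)"
    unfolding similar_mat_wit_def Let_def using unitaryD[OF Q] A by auto
  then have "char_poly A = char_poly (diag_real_mat n l)"
    by (intro char_poly_similar) (auto simp: similar_mat_def)
  also have "\<dots> = (\<Prod>a\<leftarrow>diag_mat (diag_real_mat n l). [:- a, 1:])"
    by (rule char_poly_upper_triangular[of _ n]) (auto simp: diag_real_mat_def upper_triangular_def)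
  also have "diag_mat (diag_real_mat n l) = map (\<lambda>k. complex_of_real (l k)) [0..<n]"
    by (auto simp: diag_mat_def diag_real_mat_def)
  finally show ?thesis by (simp only: proots_linear_factors)
qed

lemma vn_entropy_unitary_conj:
  assumes "unitary n Q" and "A = Q * diag_real_mat n l * mat_adjoint Q"
  shows "vn_entropy A = (\<Sum>k<n. - (l k * ln (l k)))"
proof -
  have "image_mset (\<lambda>z. Re z * ln (Re z)) (mset (map (\<lambda>k. complex_of_real (l k)) [0..<n]))
      = image_mset (\<lambda>k. l k * ln (l k)) (mset_set {..<n})"
    by (simp add: mset_map mset_upt multiset.map_comp o_def atLeast0LessThan)
  then show ?thesis unfolding vn_entropy_def proots_char_poly_unitary_conj[OF assms]
    by (simp add: sum_unfold_sum_mset[symmetric] sum_negf)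
qed

lemma trace_unitary_conj:
  assumes Q: "unitary n Q" and A: "A = Q * diag_real_mat n l * mat_adjoint Q"
  shows "(\<Sum>i<n. A $$ (i, i)) = complex_of_real (\<Sum>k<n. l k)"
proof -
  have "complex_of_real (\<Sum>k<n. l k) = (\<Sum>k<n. of_real (l k) * (\<Sum>i<n. cnj (Q $$ (i, k)) * Q $$ (i, k)))"
    using unitary_cols_orthonormal[OF Q] by simp
  also have "\<dots> = (\<Sum>i<n. \<Sum>k<n. Q $$ (i, k) * of_real (l k) * cnj (Q $$ (i, k)))"
    unfolding sum_distrib_left by (subst sum.swap) (auto intro!: sum.cong simp: mult_ac)
  also have "\<dots> = (\<Sum>i<n. A $$ (i, i))"
    unfolding A using unitaryD(1)[OF Q] by (intro sum.cong) (auto simp: index_conj_diag simp del: index_mult_mat)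
  finally show ?thesis by simp
qed

lemma sum_rotate3:
  "(\<Sum>i\<in>A. \<Sum>j\<in>B. \<Sum>k\<in>C. f i j k) = (\<Sum>j\<in>B. \<Sum>k\<in>C. \<Sum>i\<in>A. f i j k)"
  by (subst sum.swap) (simp only: sum.swap[of _ A C])

lemma sum_bilinear_exchange:
  fixes l :: "'k \<Rightarrow> 'a :: comm_ring"
  shows "(\<Sum>k\<in>K. l k * ((\<Sum>x\<in>X. u x * A x k) * (\<Sum>x'\<in>X. v x' * B x' k)))
       = (\<Sum>x\<in>X. \<Sum>x'\<in>X. u x * v x' * (\<Sum>k\<in>K. A x k * l k * B x' k))"
proof -
  have "(\<Sum>k\<in>K. l k * ((\<Sum>x\<in>X. u x * A x k) * (\<Sum>x'\<in>X. v x' * B x' k)))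
      = (\<Sum>k\<in>K. \<Sum>x\<in>X. \<Sum>x'\<in>X. u x * v x' * (A x k * l k * B x' k))"
    by (simp add: sum_product sum_distrib_left mult_ac, rule sum.cong[OF refl], rule sum.swap)
  also have "\<dots> = (\<Sum>x\<in>X. \<Sum>x'\<in>X. \<Sum>k\<in>K. u x * v x' * (A x k * l k * B x' k))"
    by (rule sum_rotate3)
  finally show ?thesis by (simp add: sum_distrib_left)
qed

lemma quadratic_form_conj_diag:
  assumes Q: "Q \<in> carrier_mat n n" and A: "A = Q * diag_real_mat n l * mat_adjoint Q"
    and v: "v \<in> carrier_vec n"
  shows "conjugate v \<bullet> (A *\<^sub>v v)
       = complex_of_real (\<Sum>k<n. l k * (cmod (\<Sum>i<n. cnj (v $ i) * Q $$ (i, k)))\<^sup>2)"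
proof -
  have "conjugate v \<bullet> (A *\<^sub>v v) = (\<Sum>i<n. \<Sum>j<n. cnj (v $ i) * v $ j * A $$ (i, j))"
    using v A Q by (auto simp: scalar_prod_def atLeast0LessThan sum_distrib_left mult_ac intro!: sum.cong)
  also have "\<dots> = (\<Sum>i<n. \<Sum>j<n. cnj (v $ i) * v $ j * (\<Sum>k<n. Q $$ (i, k) * of_real (l k) * cnj (Q $$ (j, k))))"
    by (intro sum.cong refl) (simp add: A index_conj_diag[OF Q])
  also have "\<dots> = (\<Sum>k<n. of_real (l k) * ((\<Sum>i<n. cnj (v $ i) * Q $$ (i, k)) * (\<Sum>j<n. v $ j * cnj (Q $$ (j, k)))))"
    by (rule sum_bilinear_exchange[symmetric])
  also have "\<dots> = (\<Sum>k<n. complex_of_real (l k * (cmod (\<Sum>i<n. cnj (v $ i) * Q $$ (i, k)))\<^sup>2))"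
    by (intro sum.cong refl)
      (simp only: of_real_mult complex_norm_square cnj_sum complex_cnj_mult complex_cnj_cnj mult.commute)
  finally show ?thesis by simp
qed

lemma density_op_unitary_conj:
  assumes Q: "unitary n Q" and A: "A = Q * diag_real_mat n l * mat_adjoint Q"
    and nonneg: "\<And>k. k < n \<Longrightarrow> l k \<ge> 0" and sum: "(\<Sum>k<n. l k) = 1"
  shows "density_op n A"
proof -
  note Q = unitaryD[OF Q] Q
  have "mat_adjoint A = A"
  proof (rule eq_matI)
    have A_carrier: "A \<in> carrier_mat n n" unfolding A using Q(1) by simp
    fix i j assume "i < dim_row A" "j < dim_col A"
    then have ij: "i < n" "j < n" using A_carrier by auto
    then have "mat_adjoint A $$ (i, j) = cnj (A $$ (j, i))" using A_carrier by simp
    then show "mat_adjoint A $$ (i, j) = A $$ (i, j)"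
      using ij Q(1) by (simp add: A index_conj_diag cnj_sum mult_ac del: index_mult_mat)
  qed (use Q(1) A in auto)
  moreover have "0 \<le> Re (conjugate v \<bullet> (A *\<^sub>v v))" if "v \<in> carrier_vec n" for v
    unfolding quadratic_form_conj_diag[OF Q(1) A that] using nonneg by (auto intro!: sum_nonneg)
  ultimately show ?thesis
    using Q sum trace_unitary_conj[OF Q(4) A] unfolding A density_op_def by simp
qed

lemma density_op_spectral:
  assumes D: "density_op n A"
  obtains Q l where "unitary n Q" "A = Q * diag_real_mat n l * mat_adjoint Q"
    "\<And>k. k < n \<Longrightarrow> l k \<ge> 0" "(\<Sum>k<n. l k) = 1"
proof -
  have A: "A \<in> carrier_mat n n" and herm: "mat_adjoint A = A"
    and psd: "\<And>v. v \<in> carrier_vec n \<Longrightarrow> 0 \<le> Re (conjugate v \<bullet> (A *\<^sub>v v))"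
    and tr: "(\<Sum>i<n. A $$ (i, i)) = 1"
    using D unfolding density_op_def by auto
  obtain Q l where Q: "unitary n Q" and Ad: "A = Q * diag_real_mat n l * mat_adjoint Q"
    using hermitian_spectral_decomposition[OF A herm] by blast
  note Q' = unitaryD[OF Q]
  have nonneg: "l k \<ge> 0" if k: "k < n" for k
  proof -
    have "complex_of_real (l k) = (mat_adjoint Q * (A * Q)) $$ (k, k)"
      using unitary_conj_cancel[OF Q diag_real_mat_carrier Ad] k A Q'
      by (simp add: diag_real_mat_def assoc_mult_mat[of _ n n _ n _ n])
    also have "\<dots> = conjugate (col Q k) \<bullet> (A *\<^sub>v col Q k)"
      using k A Q' by (auto simp: index_mult_mat_sum[of _ n n _ n] scalar_prod_def atLeast0LessThan
          intro!: sum.cong)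
    finally have "l k = Re (conjugate (col Q k) \<bullet> (A *\<^sub>v col Q k))"
      by (metis Re_complex_of_real)
    then show ?thesis using psd k Q' by auto
  qed
  have "(\<Sum>k<n. l k) = 1" using trace_unitary_conj[OF Q Ad] tr by (metis of_real_eq_1_iff)
  then show ?thesis using that Q Ad nonneg by blast
qed

lemma shannon_entropy_le_ln_card:
  fixes p :: "nat \<Rightarrow> real"
  assumes nonneg: "\<And>k. k < n \<Longrightarrow> p k \<ge> 0" and sum: "(\<Sum>k<n. p k) = 1" and n: "n > 0"
  shows "(\<Sum>k<n. - (p k * ln (p k))) \<le> ln (real n)"
proof -
  have pointwise: "- (p k * ln (p k)) - p k * ln (real n) \<le> 1 / real n - p k" if k: "k < n" for k
  proof (cases "p k = 0")
    case False
    then have pk: "p k > 0" using nonneg[OF k] by simp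
    have "p k * ln (1 / (real n * p k)) \<le> p k * (1 / (real n * p k) - 1)"
      using pk n by (intro mult_left_mono ln_le_minus_one) simp_all
    moreover have "ln (1 / (real n * p k)) = - ln (real n) - ln (p k)"
      using pk n by (simp add: ln_div ln_mult)
    moreover have "p k * (1 / (real n * p k) - 1) = 1 / real n - p k"
      using pk n by (simp add: field_simps)
    ultimately show ?thesis by (simp add: algebra_simps)
  qed (use n in simp)
  have "(\<Sum>k<n. - (p k * ln (p k))) - ln (real n) = (\<Sum>k<n. - (p k * ln (p k)) - p k * ln (real n))"
    using sum by (simp add: sum_subtractf sum_distrib_right[symmetric])
  also have "\<dots> \<le> (\<Sum>k<n. 1 / real n - p k)" by (rule sum_mono) (simp add: pointwise)
  also have "\<dots> = 0" using sum n by (simp add: sum_subtractf)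
  finally show ?thesis by simp
qed

lemma vn_entropy_le_ln_dim:
  assumes "density_op n A" "n > 0"
  shows "vn_entropy A \<le> ln (real n)"
proof -
  obtain Q l where Q: "unitary n Q" and A: "A = Q * diag_real_mat n l * mat_adjoint Q"
    and nonneg: "\<And>k. k < n \<Longrightarrow> l k \<ge> 0" and sum: "(\<Sum>k<n. l k) = 1"
    using density_op_spectral[OF assms(1)] by blast
  show ?thesis
    unfolding vn_entropy_unitary_conj[OF Q A] by (rule shannon_entropy_le_ln_card[OF nonneg sum assms(2)])
qed

lemma member_le_sum2:
  fixes f :: "'a \<Rightarrow> 'b \<Rightarrow> real"
  assumes "finite A" "finite B" "i \<in> A" "j \<in> B" "\<And>i j. i \<in> A \<Longrightarrow> j \<in> B \<Longrightarrow> f i j \<ge> 0"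
  shows "f i j \<le> (\<Sum>i\<in>A. \<Sum>j\<in>B. f i j)"
proof -
  have "f i j \<le> (\<Sum>j\<in>B. f i j)" using assms by (intro member_le_sum) auto
  also have "\<dots> \<le> (\<Sum>i\<in>A. \<Sum>j\<in>B. f i j)"
    using assms by (intro member_le_sum[of i A "\<lambda>i. \<Sum>j\<in>B. f i j"]) (auto intro: sum_nonneg)
  finally show ?thesis .
qed

lemma log_ratio_term_le:
  fixes q a l :: real
  assumes "q \<ge> 0" "q \<le> a" "q \<le> l" "d > 0"
  shows "q * (ln l - ln (real d) - ln a) \<le> (l / real d) * (q / a) - q"
proof (cases "q = 0")
  case False
  then have q: "q > 0" and a: "a > 0" and l: "l > 0" using assms by auto
  have "q * ln (l / (real d * a)) \<le> q * (l / (real d * a) - 1)"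
    using q a l assms(4) by (intro mult_left_mono ln_le_minus_one) simp_all
  moreover have "ln (l / (real d * a)) = ln l - ln (real d) - ln a"
    using a l assms(4) by (simp add: ln_div ln_mult)
  moreover have "q * (l / (real d * a) - 1) = (l / real d) * (q / a) - q"
    using a assms(4) by (simp add: field_simps)
  ultimately show ?thesis by simp
qed simp

lemma shannon_entropy_coupling_bound:
  fixes q :: "nat \<Rightarrow> nat \<Rightarrow> nat \<Rightarrow> real" and a l :: "nat \<Rightarrow> real"
  assumes nonneg: "\<And>i b k. i < m \<Longrightarrow> b < d \<Longrightarrow> k < K \<Longrightarrow> q i b k \<ge> 0"
    and marg_a: "\<And>i. i < m \<Longrightarrow> (\<Sum>b<d. \<Sum>k<K. q i b k) = a i"
    and marg_l: "\<And>k. k < K \<Longrightarrow> (\<Sum>i<m. \<Sum>b<d. q i b k) = l k"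
    and dominated: "\<And>b k. b < d \<Longrightarrow> k < K \<Longrightarrow> (\<Sum>i<m. q i b k / a i) \<le> 1"
    and sum: "(\<Sum>k<K. l k) = 1" and d: "d > 0"
  shows "(\<Sum>i<m. - (a i * ln (a i))) \<le> (\<Sum>k<K. - (l k * ln (l k))) + ln (real d)"
proof -
  have l_nonneg: "l k \<ge> 0" if "k < K" for k
  proof -
    have "0 \<le> (\<Sum>i<m. \<Sum>b<d. q i b k)" using nonneg that by (intro sum_nonneg) auto
    then show ?thesis using marg_l[OF that] by simp
  qed
  have pointwise: "q i b k * (ln (l k) - ln (real d) - ln (a i)) \<le> (l k / real d) * (q i b k / a i) - q i b k"
    if ibk: "i < m" "b < d" "k < K" for i b k
  proof (rule log_ratio_term_le[OF nonneg[OF ibk] _ _ d])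
    show "q i b k \<le> a i"
      using member_le_sum2[of "{..<d}" "{..<K}" b k "q i"] ibk nonneg marg_a by simp
    show "q i b k \<le> l k"
      using member_le_sum2[of "{..<m}" "{..<d}" i b "\<lambda>i b. q i b k"] ibk nonneg marg_l by simp
  qed
  have total: "(\<Sum>i<m. \<Sum>b<d. \<Sum>k<K. q i b k) = 1"
    unfolding sum_rotate3[where A="{..<m}"] sum_rotate3[where A="{..<d}"] using marg_l sum by simp
  have "(\<Sum>i<m. \<Sum>b<d. \<Sum>k<K. q i b k * (ln (l k) - ln (real d) - ln (a i)))
      \<le> (\<Sum>i<m. \<Sum>b<d. \<Sum>k<K. (l k / real d) * (q i b k / a i) - q i b k)"
    by (intro sum_mono pointwise) auto
  also have "\<dots> = (\<Sum>b<d. \<Sum>k<K. (l k / real d) * (\<Sum>i<m. q i b k / a i)) - 1"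
    unfolding sum_subtractf total sum_rotate3[where A="{..<m}"] by (simp add: sum_distrib_left)
  also have "\<dots> \<le> (\<Sum>b<d. \<Sum>k<K. l k / real d) - 1"
    using dominated l_nonneg d by (intro diff_right_mono sum_mono mult_left_le) auto
  also have "\<dots> = 0" using sum d by (simp add: sum_divide_distrib[symmetric])
  finally have le0: "(\<Sum>i<m. \<Sum>b<d. \<Sum>k<K. q i b k * (ln (l k) - ln (real d) - ln (a i))) \<le> 0" .
  have "(\<Sum>i<m. \<Sum>b<d. \<Sum>k<K. q i b k * (ln (l k) - ln (real d) - ln (a i)))
      = (\<Sum>i<m. \<Sum>b<d. \<Sum>k<K. q i b k * ln (l k))
        - (\<Sum>i<m. \<Sum>b<d. \<Sum>k<K. q i b k) * ln (real d)
        - (\<Sum>i<m. (\<Sum>b<d. \<Sum>k<K. q i b k) * ln (a i))"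
    by (simp only: right_diff_distrib sum_subtractf sum_distrib_right)
  also have "(\<Sum>i<m. \<Sum>b<d. \<Sum>k<K. q i b k * ln (l k)) = (\<Sum>k<K. l k * ln (l k))"
    unfolding sum_rotate3[where A="{..<m}"] sum_rotate3[where A="{..<d}"]
    using marg_l by (simp add: sum_distrib_right[symmetric])
  finally have "(\<Sum>i<m. \<Sum>b<d. \<Sum>k<K. q i b k * (ln (l k) - ln (real d) - ln (a i)))
      = (\<Sum>k<K. l k * ln (l k)) - ln (real d) - (\<Sum>i<m. a i * ln (a i))"
    using marg_a total by simp
  with le0 show ?thesis by (simp add: sum_negf)
qed

subsection \<open>Partial trace and entropy\<close>

lemma bessel_inequality_unit_vector:
  fixes g :: "'i \<Rightarrow> 't \<Rightarrow> complex"
  assumes I: "finite I" and T: "finite T" and t0: "t0 \<in> T"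
    and orth: "\<And>i j. i \<in> I \<Longrightarrow> j \<in> I \<Longrightarrow> i \<noteq> j \<Longrightarrow> (\<Sum>t\<in>T. g i t * cnj (g j t)) = 0"
    and norm: "\<And>i. i \<in> I \<Longrightarrow> (\<Sum>t\<in>T. g i t * cnj (g i t)) = 1 \<or> (\<forall>t\<in>T. g i t = 0)"
  shows "(\<Sum>i\<in>I. (cmod (g i t0))\<^sup>2) \<le> 1"
proof -
  define s where "s = (\<Sum>i\<in>I. (cmod (g i t0))\<^sup>2)"
  have s: "complex_of_real s = (\<Sum>i\<in>I. cnj (g i t0) * g i t0)"
    unfolding s_def of_real_sum by (simp only: complex_norm_square) (simp add: mult.commute)
  define z where "z t = (\<Sum>i\<in>I. cnj (g i t0) * g i t)" for t
  have "(\<Sum>t\<in>T. z t * cnj (z t))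
      = (\<Sum>t\<in>T. \<Sum>i\<in>I. \<Sum>j\<in>I. cnj (g i t0) * g j t0 * (g i t * cnj (g j t)))"
    unfolding z_def by (simp add: cnj_sum sum_product mult.commute mult.left_commute)
  also have "\<dots> = (\<Sum>i\<in>I. \<Sum>j\<in>I. cnj (g i t0) * g j t0 * (\<Sum>t\<in>T. g i t * cnj (g j t)))"
    unfolding sum_rotate3[where A = T] by (simp add: sum_distrib_left)
  also have "\<dots> = (\<Sum>i\<in>I. \<Sum>j\<in>I. if j = i then cnj (g i t0) * g i t0 * (\<Sum>t\<in>T. g i t * cnj (g i t)) else 0)"
    using orth by (intro sum.cong refl) auto
  also have "\<dots> = (\<Sum>i\<in>I. cnj (g i t0) * g i t0 * (\<Sum>t\<in>T. g i t * cnj (g i t)))"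
    using I by (simp add: sum.delta)
  also have "\<dots> = complex_of_real s"
    unfolding s using norm t0 by (intro sum.cong refl) fastforce
  finally have zz: "(\<Sum>t\<in>T. z t * cnj (z t)) = complex_of_real s" .
  define e where "e t = (if t = t0 then (1 :: complex) else 0)" for t
  have delta: "(\<Sum>t\<in>T. e t * h t) = h t0" "(\<Sum>t\<in>T. h t * cnj (e t)) = h t0" for h
  proof -
    have "(\<Sum>t\<in>T. e t * h t) = (\<Sum>t\<in>T. if t = t0 then h t else 0)"
      "(\<Sum>t\<in>T. h t * cnj (e t)) = (\<Sum>t\<in>T. if t = t0 then h t else 0)"
      by (auto simp: e_def intro!: sum.cong)
    then show "(\<Sum>t\<in>T. e t * h t) = h t0" "(\<Sum>t\<in>T. h t * cnj (e t)) = h t0"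
      using T t0 by (simp_all add: sum.delta)
  qed
  have "(\<Sum>t\<in>T. (e t - z t) * cnj (e t - z t))
      = (\<Sum>t\<in>T. e t * cnj (e t)) - (\<Sum>t\<in>T. e t * cnj (z t)) - (\<Sum>t\<in>T. z t * cnj (e t))
        + (\<Sum>t\<in>T. z t * cnj (z t))"
    by (simp add: algebra_simps sum.distrib sum_subtractf)
  also have "\<dots> = complex_of_real (1 - s)"
    using zz unfolding delta by (simp add: e_def z_def s mult.commute)
  finally have "complex_of_real (1 - s) = complex_of_real (\<Sum>t\<in>T. (cmod (e t - z t))\<^sup>2)"
    by (simp only: of_real_sum complex_norm_square)
  then have "1 - s = (\<Sum>t\<in>T. (cmod (e t - z t))\<^sup>2)" by (simp only: of_real_eq_iff)
  moreover have "(\<Sum>t\<in>T. (cmod (e t - z t))\<^sup>2) \<ge> 0" by (intro sum_nonneg) simp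
  ultimately show ?thesis by (simp add: s_def)
qed

lemma weighted_sum_rescale:
  fixes c c' :: "nat \<Rightarrow> nat \<Rightarrow> complex" and l :: "nat \<Rightarrow> real"
  assumes l_nonneg: "\<And>k. k < K \<Longrightarrow> l k \<ge> 0"
  shows "(\<Sum>b<d. \<Sum>k<K. complex_of_real (sqrt (l k / x)) * c b k * cnj (complex_of_real (sqrt (l k / y)) * c' b k))
       = complex_of_real (1 / sqrt (x * y)) * (\<Sum>b<d. \<Sum>k<K. of_real (l k) * (c b k * cnj (c' b k)))"
  unfolding sum_distrib_left
proof (intro sum.cong refl)
  fix b k assume "k \<in> {..<K}"
  then have "sqrt (l k / x) * sqrt (l k / y) = l k * (1 / sqrt (x * y))"
    using l_nonneg by (simp add: real_sqrt_mult[symmetric] real_sqrt_divide)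
  moreover have "complex_of_real (sqrt (l k / x)) * c b k * cnj (complex_of_real (sqrt (l k / y)) * c' b k)
      = complex_of_real (sqrt (l k / x) * sqrt (l k / y)) * (c b k * cnj (c' b k))"
    by (simp only: complex_cnj_mult complex_cnj_complex_of_real of_real_mult mult_ac)
  ultimately show "complex_of_real (sqrt (l k / x)) * c b k * cnj (complex_of_real (sqrt (l k / y)) * c' b k)
      = complex_of_real (1 / sqrt (x * y)) * (of_real (l k) * (c b k * cnj (c' b k)))"
    by (simp only: of_real_mult mult_ac)
qed

text \<open>The rescaled family sqrt (l k / a i) * c i b k is orthonormal or zero, so this is
  Bessel's inequality.\<close>

lemma gram_diagonal_slice_bound:
  fixes c :: "nat \<Rightarrow> nat \<Rightarrow> nat \<Rightarrow> complex" and l a :: "nat \<Rightarrow> real"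
  assumes gram: "\<And>i j. i < m \<Longrightarrow> j < m \<Longrightarrow>
      (\<Sum>b<d. \<Sum>k<K. of_real (l k) * (c i b k * cnj (c j b k))) = (if i = j then complex_of_real (a i) else 0)"
    and l_nonneg: "\<And>k. k < K \<Longrightarrow> l k \<ge> 0" and b: "b < d" and k: "k < K"
  shows "(\<Sum>i<m. l k * (cmod (c i b k))\<^sup>2 / a i) \<le> 1"
proof -
  have a_sum: "complex_of_real (a i) = complex_of_real (\<Sum>b<d. \<Sum>k<K. l k * (cmod (c i b k))\<^sup>2)"
    if "i < m" for i
    unfolding of_real_sum of_real_mult complex_norm_square using gram[OF that that] by simp
  have a_nonneg: "a i \<ge> 0" if "i < m" for i
    using a_sum[OF that] l_nonneg by (simp only: of_real_eq_iff) (auto intro!: sum_nonneg)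
  define g where "g i t = complex_of_real (sqrt (l (snd t) / a i)) * c i (fst t) (snd t)" for i t
  have g_inner: "(\<Sum>t\<in>{..<d} \<times> {..<K}. g i t * cnj (g j t))
      = complex_of_real (1 / sqrt (a i * a j)) * (if i = j then complex_of_real (a i) else 0)"
    if "i < m" "j < m" for i j
  proof -
    have "(\<Sum>t\<in>{..<d} \<times> {..<K}. g i t * cnj (g j t)) = (\<Sum>b<d. \<Sum>k<K. g i (b, k) * cnj (g j (b, k)))"
      by (simp add: sum.cartesian_product)
    then show ?thesis
      by (simp only: g_def fst_conv snd_conv weighted_sum_rescale[OF l_nonneg] gram[OF that])
  qed
  have "(\<Sum>i\<in>{..<m}. (cmod (g i (b, k)))\<^sup>2) \<le> 1"
  proof (rule bessel_inequality_unit_vector)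
    fix i assume i: "i \<in> {..<m}"
    show "(\<Sum>t\<in>{..<d} \<times> {..<K}. g i t * cnj (g i t)) = 1 \<or> (\<forall>t\<in>{..<d} \<times> {..<K}. g i t = 0)"
    proof (cases "a i = 0")
      case False
      then have "a i > 0" using a_nonneg i by force
      then show ?thesis using g_inner[of i i] i by simp
    qed (simp add: g_def)
  qed (use b k g_inner in auto)
  moreover have "(cmod (g i (b, k)))\<^sup>2 = l k * (cmod (c i b k))\<^sup>2 / a i" if "i < m" for i
  proof -
    have "0 \<le> l k / a i" using l_nonneg[OF k] a_nonneg[OF that] by simp
    then show ?thesis by (simp add: g_def norm_mult power_mult_distrib del: real_sqrt_divide)
  qed
  ultimately show ?thesis by simp
qed

lemma mixed_radix_index_less: "x < m \<Longrightarrow> b < d \<Longrightarrow> x + m * b < m * (d :: nat)"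
proof -
  assume "x < m" "b < d"
  then have "x + m * b < m * Suc b" by simp
  also have "\<dots> \<le> m * d" using \<open>b < d\<close> by (intro mult_le_mono2) simp
  finally show ?thesis .
qed

lemma sum_lessThan_mult: "(\<Sum>y<(m :: nat) * d. f y) = (\<Sum>b<d. \<Sum>x<m. f (x + m * b))"
proof (induction d)
  case (Suc d)
  have shift: "(\<Sum>y<a + c. f y) = (\<Sum>y<a. f y) + (\<Sum>x<c. f (x + a))" for a c
    by (induction c) (simp_all add: add_ac)
  show ?case using Suc shift[of "m * d" m] by (simp add: add.commute)
qed simp

definition partial_trace_last :: "nat \<Rightarrow> nat \<Rightarrow> complex mat \<Rightarrow> complex mat" where
  "partial_trace_last m d R = mat m m (\<lambda>(x, x'). \<Sum>b<d. R $$ (x + m * b, x' + m * b))"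

lemma partial_trace_last_carrier [simp]: "partial_trace_last m d R \<in> carrier_mat m m"
  by (simp add: partial_trace_last_def)

lemma density_op_hermitian_index:
  "density_op n A \<Longrightarrow> i < n \<Longrightarrow> j < n \<Longrightarrow> A $$ (i, j) = cnj (A $$ (j, i))"
  unfolding density_op_def by (auto intro: hermitian_index)

lemma partial_trace_last_hermitian:
  assumes "density_op (m * d) R"
  shows "mat_adjoint (partial_trace_last m d R) = partial_trace_last m d R"
proof (rule eq_matI)
  fix x x' assume "x < dim_row (partial_trace_last m d R)" "x' < dim_col (partial_trace_last m d R)"
  then have xx: "x < m" "x' < m" by (simp_all add: partial_trace_last_def)
  then show "mat_adjoint (partial_trace_last m d R) $$ (x, x') = partial_trace_last m d R $$ (x, x')"
    by (simp add: partial_trace_last_def cnj_sum)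
      (intro sum.cong refl, subst density_op_hermitian_index[OF assms],
       auto intro: mixed_radix_index_less)
qed (auto simp: partial_trace_last_def)

text \<open>overlap m F Q i b k is the inner product of f_i \<otimes> e_b with the k-th column of Q,
  where f_i is the i-th column of F.\<close>

lemma index_adjoint_conj:
  fixes Q A :: "complex mat"
  assumes Q: "Q \<in> carrier_mat n n" and A: "A \<in> carrier_mat n n" and i: "i < n" and j: "j < n"
  shows "(mat_adjoint Q * A * Q) $$ (i, j) = (\<Sum>x<n. \<Sum>x'<n. cnj (Q $$ (x, i)) * A $$ (x, x') * Q $$ (x', j))"
proof -
  have "(mat_adjoint Q * A * Q) $$ (i, j) = (\<Sum>x'<n. (mat_adjoint Q * A) $$ (i, x') * Q $$ (x', j))"
    using Q A i j by (intro index_mult_mat_sum) auto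
  also have "\<dots> = (\<Sum>x'<n. \<Sum>x<n. cnj (Q $$ (x, i)) * A $$ (x, x') * Q $$ (x', j))"
    using Q A i by (intro sum.cong refl) (simp add: index_mult_mat_sum[of _ n n _ n] sum_distrib_right del: index_mult_mat)
  also have "\<dots> = (\<Sum>x<n. \<Sum>x'<n. cnj (Q $$ (x, i)) * A $$ (x, x') * Q $$ (x', j))"
    by (rule sum.swap)
  finally show ?thesis .
qed

definition overlap :: "nat \<Rightarrow> complex mat \<Rightarrow> complex mat \<Rightarrow> nat \<Rightarrow> nat \<Rightarrow> nat \<Rightarrow> complex" where
  "overlap m F Q i b k = (\<Sum>x<m. cnj (F $$ (x, i)) * Q $$ (x + m * b, k))"

lemma overlap_gram:
  assumes Q: "Q \<in> carrier_mat (m * d) (m * d)" and R: "R = Q * diag_real_mat (m * d) l * mat_adjoint Q"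
    and F: "unitary m F" and PR: "partial_trace_last m d R = F * diag_real_mat m a * mat_adjoint F"
    and ij: "i < m" "j < m"
  shows "(\<Sum>b<d. \<Sum>k<m * d. of_real (l k) * (overlap m F Q i b k * cnj (overlap m F Q j b k)))
       = (if i = j then complex_of_real (a i) else 0)"
proof -
  have R_index: "R $$ (y, y') = (\<Sum>k<m * d. Q $$ (y, k) * of_real (l k) * cnj (Q $$ (y', k)))"
    if "y < m * d" "y' < m * d" for y y'
    unfolding R using Q that by (rule index_conj_diag)
  have "(\<Sum>k<m * d. of_real (l k) * (overlap m F Q i b k * cnj (overlap m F Q j b k)))
      = (\<Sum>x<m. \<Sum>x'<m. cnj (F $$ (x, i)) * F $$ (x', j) * R $$ (x + m * b, x' + m * b))"
    if b: "b < d" for b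
    unfolding overlap_def cnj_sum complex_cnj_mult complex_cnj_cnj sum_bilinear_exchange
    using b by (intro sum.cong refl) (simp add: R_index mixed_radix_index_less)
  then have "(\<Sum>b<d. \<Sum>k<m * d. of_real (l k) * (overlap m F Q i b k * cnj (overlap m F Q j b k)))
      = (\<Sum>x<m. \<Sum>x'<m. cnj (F $$ (x, i)) * partial_trace_last m d R $$ (x, x') * F $$ (x', j))"
    by (simp add: sum_rotate3[where A = "{..<d}"] partial_trace_last_def sum_distrib_left mult_ac)
  also have "\<dots> = (mat_adjoint F * partial_trace_last m d R * F) $$ (i, j)"
    by (rule index_adjoint_conj[OF unitaryD(1)[OF F] partial_trace_last_carrier ij, symmetric])
  also have "\<dots> = (if i = j then complex_of_real (a i) else 0)"
    using unitary_conj_cancel[OF F diag_real_mat_carrier PR] ij by (simp add: diag_real_mat_def)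
  finally show ?thesis .
qed

lemma overlap_column_norm:
  assumes Q: "unitary (m * d) Q" and F: "unitary m F" and k: "k < m * d"
  shows "(\<Sum>b<d. \<Sum>i<m. overlap m F Q i b k * cnj (overlap m F Q i b k)) = 1"
proof -
  have "(\<Sum>i<m. overlap m F Q i b k * cnj (overlap m F Q i b k))
      = (\<Sum>x<m. Q $$ (x + m * b, k) * cnj (Q $$ (x + m * b, k)))" for b
  proof -
    have "(\<Sum>i<m. overlap m F Q i b k * cnj (overlap m F Q i b k))
        = (\<Sum>i<m. 1 * ((\<Sum>x<m. Q $$ (x + m * b, k) * cnj (F $$ (x, i)))
                       * (\<Sum>x'<m. cnj (Q $$ (x' + m * b, k)) * F $$ (x', i))))"
      unfolding overlap_def by (simp add: cnj_sum mult_ac)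
    also have "\<dots> = (\<Sum>x<m. \<Sum>x'<m. Q $$ (x + m * b, k) * cnj (Q $$ (x' + m * b, k))
             * (\<Sum>i<m. cnj (F $$ (x, i)) * 1 * F $$ (x', i)))"
      by (rule sum_bilinear_exchange)
    also have "\<dots> = (\<Sum>x<m. \<Sum>x'<m. if x' = x then Q $$ (x + m * b, k) * cnj (Q $$ (x + m * b, k)) else 0)"
      using unitary_rows_orthonormal[OF F] by (intro sum.cong refl) (auto simp: mult.commute)
    finally show ?thesis by (simp add: sum.delta)
  qed
  then have "(\<Sum>b<d. \<Sum>i<m. overlap m F Q i b k * cnj (overlap m F Q i b k))
      = (\<Sum>b<d. \<Sum>x<m. Q $$ (x + m * b, k) * cnj (Q $$ (x + m * b, k)))"
    by simp
  also have "\<dots> = (\<Sum>y<m * d. Q $$ (y, k) * cnj (Q $$ (y, k)))"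
    by (rule sum_lessThan_mult[symmetric])
  also have "\<dots> = (\<Sum>y<m * d. cnj (Q $$ (y, k)) * Q $$ (y, k))"
    by (simp add: mult.commute)
  also have "\<dots> = 1" using unitary_cols_orthonormal[OF Q k k] by simp
  finally show ?thesis .
qed

theorem vn_entropy_partial_trace_last_le:
  assumes D: "density_op (m * d) R" and d: "d > 0"
  shows "vn_entropy (partial_trace_last m d R) \<le> vn_entropy R + ln (real d)"
proof -
  obtain Q l where Q: "unitary (m * d) Q" and R: "R = Q * diag_real_mat (m * d) l * mat_adjoint Q"
    and l_nonneg: "\<And>k. k < m * d \<Longrightarrow> l k \<ge> 0" and l_sum: "(\<Sum>k<m * d. l k) = 1"
    using density_op_spectral[OF D] by blast
  obtain F a where F: "unitary m F" and PR: "partial_trace_last m d R = F * diag_real_mat m a * mat_adjoint F"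
    using hermitian_spectral_decomposition[OF partial_trace_last_carrier partial_trace_last_hermitian[OF D]]
    by blast
  define c where "c = overlap m F Q"
  define q where "q i b k = l k * (cmod (c i b k))\<^sup>2" for i b k
  have gram: "(\<Sum>b<d. \<Sum>k<m * d. of_real (l k) * (c i b k * cnj (c j b k)))
      = (if i = j then complex_of_real (a i) else 0)" if "i < m" "j < m" for i j
    unfolding c_def by (rule overlap_gram[OF unitaryD(1)[OF Q] R F PR that])
  have q_complex: "complex_of_real (q i b k) = of_real (l k) * (c i b k * cnj (c i b k))" for i b k
    unfolding q_def of_real_mult by (simp only: complex_norm_square)
  have "(\<Sum>i<m. - (a i * ln (a i))) \<le> (\<Sum>k<m * d. - (l k * ln (l k))) + ln (real d)"
  proof (rule shannon_entropy_coupling_bound[of m d "m * d" q])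
    show "(\<Sum>b<d. \<Sum>k<m * d. q i b k) = a i" if "i < m" for i
      using gram[OF that that] by (simp flip: q_complex of_real_sum)
    show "(\<Sum>i<m. \<Sum>b<d. q i b k) = l k" if "k < m * d" for k
    proof -
      have "complex_of_real (\<Sum>i<m. \<Sum>b<d. q i b k)
          = of_real (l k) * (\<Sum>b<d. \<Sum>i<m. c i b k * cnj (c i b k))"
        by (simp add: q_complex sum_distrib_left sum.swap[of _ "{..<m}" "{..<d}"])
      also have "\<dots> = complex_of_real (l k)"
        using overlap_column_norm[OF Q F that] by (simp add: c_def)
      finally show ?thesis by (simp only: of_real_eq_iff)
    qed
    show "(\<Sum>i<m. q i b k / a i) \<le> 1" if "b < d" "k < m * d" for b k
      unfolding q_def by (rule gram_diagonal_slice_bound[OF gram l_nonneg that]) auto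
  qed (use l_nonneg l_sum d in \<open>auto simp: q_def\<close>)
  then show ?thesis unfolding vn_entropy_unitary_conj[OF Q R] vn_entropy_unitary_conj[OF F PR] .
qed

subsection \<open>Marginals\<close>

lemma marg_carrier [simp]: "marg d m k l A \<in> carrier_mat (d ^ l) (d ^ l)"
  by (simp add: marg_def)

lemma marg_index:
  "a < d ^ l \<Longrightarrow> b < d ^ l \<Longrightarrow> marg d m k l A $$ (a, b) =
     (\<Sum>x<d ^ k. \<Sum>y<d ^ (m - k - l). A $$ (x + d ^ k * a + d ^ (k + l) * y, x + d ^ k * b + d ^ (k + l) * y))"
  by (simp add: marg_def)

lemma marg_index_less:
  assumes "x < d ^ k" "a < d ^ l" "y < d ^ (m - k - l)" "k + l \<le> m"
  shows "x + d ^ k * a + d ^ (k + l) * y < (d :: nat) ^ m"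
proof -
  have "x + d ^ k * a < d ^ k * d ^ l" by (rule mixed_radix_index_less) (use assms in auto)
  then have "x + d ^ k * a + d ^ (k + l) * y < d ^ (k + l) * d ^ (m - k - l)"
    by (intro mixed_radix_index_less) (use assms in \<open>auto simp: power_add\<close>)
  also have "\<dots> = d ^ m" using assms(4) by (simp flip: power_add)
  finally show ?thesis .
qed

lemma marg_hermitian:
  assumes D: "density_op (d ^ m) A" and kl: "k + l \<le> m"
  shows "mat_adjoint (marg d m k l A) = marg d m k l A"
proof (rule eq_matI)
  fix a b assume "a < dim_row (marg d m k l A)" "b < dim_col (marg d m k l A)"
  then have ab: "a < d ^ l" "b < d ^ l" by (auto simp: marg_def)
  then have "mat_adjoint (marg d m k l A) $$ (a, b) = cnj (marg d m k l A $$ (b, a))"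
    by (simp add: marg_def)
  also have "\<dots> = marg d m k l A $$ (a, b)"
    using ab by (simp add: marg_index cnj_sum, intro sum.cong refl, subst density_op_hermitian_index[OF D])
      (auto intro: marg_index_less[OF _ _ _ kl])
  finally show "mat_adjoint (marg d m k l A) $$ (a, b) = marg d m k l A $$ (a, b)" .
qed (auto simp: marg_def)

lemma marg_quadratic_form_nonneg:
  assumes A: "A = Q * diag_real_mat (d ^ m) lam * mat_adjoint Q" and Q: "Q \<in> carrier_mat (d ^ m) (d ^ m)"
    and nonneg: "\<And>j. j < d ^ m \<Longrightarrow> lam j \<ge> 0" and kl: "k + l \<le> m" and v: "v \<in> carrier_vec (d ^ l)"
  shows "0 \<le> Re (conjugate v \<bullet> (marg d m k l A *\<^sub>v v))"
proof -
  let ?f = "\<lambda>x a y. x + d ^ k * a + d ^ (k + l) * y"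
  let ?w = "\<lambda>x y j. \<Sum>a<d ^ l. cnj (v $ a) * Q $$ (?f x a y, j)"
  have A_index: "A $$ (?f x a y, ?f x b y) = (\<Sum>j<d ^ m. Q $$ (?f x a y, j) * of_real (lam j) * cnj (Q $$ (?f x b y, j)))"
    if "x < d ^ k" "y < d ^ (m - k - l)" "a < d ^ l" "b < d ^ l" for x y a b
    unfolding A using Q that by (intro index_conj_diag marg_index_less[OF _ _ _ kl])
  have "conjugate v \<bullet> (marg d m k l A *\<^sub>v v) = (\<Sum>a<d ^ l. \<Sum>b<d ^ l. cnj (v $ a) * (marg d m k l A $$ (a, b) * v $ b))"
    using v by (auto simp: scalar_prod_def atLeast0LessThan marg_def sum_distrib_left intro!: sum.cong)
  also have "\<dots> = (\<Sum>a<d ^ l. \<Sum>b<d ^ l. \<Sum>x<d ^ k. \<Sum>y<d ^ (m - k - l).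
      cnj (v $ a) * v $ b * (\<Sum>j<d ^ m. Q $$ (?f x a y, j) * of_real (lam j) * cnj (Q $$ (?f x b y, j))))"
  proof (intro sum.cong refl)
    fix a b assume ab: "a \<in> {..<d ^ l}" "b \<in> {..<d ^ l}"
    have "marg d m k l A $$ (a, b) = (\<Sum>x<d ^ k. \<Sum>y<d ^ (m - k - l).
        (\<Sum>j<d ^ m. Q $$ (?f x a y, j) * of_real (lam j) * cnj (Q $$ (?f x b y, j))))"
      using ab by (simp add: marg_index A_index)
    then show "cnj (v $ a) * (marg d m k l A $$ (a, b) * v $ b) = (\<Sum>x<d ^ k. \<Sum>y<d ^ (m - k - l).
        cnj (v $ a) * v $ b * (\<Sum>j<d ^ m. Q $$ (?f x a y, j) * of_real (lam j) * cnj (Q $$ (?f x b y, j))))"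
      by (simp add: sum_distrib_left mult_ac)
  qed
  also have "\<dots> = (\<Sum>x<d ^ k. \<Sum>y<d ^ (m - k - l). \<Sum>a<d ^ l. \<Sum>b<d ^ l.
      cnj (v $ a) * v $ b * (\<Sum>j<d ^ m. Q $$ (?f x a y, j) * of_real (lam j) * cnj (Q $$ (?f x b y, j))))"
    by (simp only: sum_rotate3[where A = "{..<d ^ l}"])
  also have "\<dots> = (\<Sum>x<d ^ k. \<Sum>y<d ^ (m - k - l). \<Sum>j<d ^ m. of_real (lam j) *
      ((\<Sum>a<d ^ l. cnj (v $ a) * Q $$ (?f x a y, j)) * (\<Sum>b<d ^ l. v $ b * cnj (Q $$ (?f x b y, j)))))"
    by (simp only: sum_bilinear_exchange)
  also have "\<dots> = complex_of_real (\<Sum>x<d ^ k. \<Sum>y<d ^ (m - k - l). \<Sum>j<d ^ m. lam j * (cmod (?w x y j))\<^sup>2)"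
    unfolding of_real_sum
    by (intro sum.cong refl)
      (simp only: of_real_mult complex_norm_square cnj_sum complex_cnj_mult complex_cnj_cnj mult.commute)
  finally show ?thesis using nonneg by (auto intro!: sum_nonneg)
qed

lemma marg_trace:
  assumes A: "A \<in> carrier_mat (d ^ m) (d ^ m)" and kl: "k + l \<le> m"
  shows "(\<Sum>a<d ^ l. marg d m k l A $$ (a, a)) = (\<Sum>s<d ^ m. A $$ (s, s))"
proof -
  have e: "(d :: nat) ^ m = (d ^ k * d ^ l) * d ^ (m - k - l)" using kl by (simp flip: power_add)
  have "(\<Sum>s<d ^ m. A $$ (s, s))
      = (\<Sum>y<d ^ (m - k - l). \<Sum>z<d ^ k * d ^ l. A $$ (z + (d ^ k * d ^ l) * y, z + (d ^ k * d ^ l) * y))"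
    unfolding e by (rule sum_lessThan_mult)
  also have "\<dots> = (\<Sum>y<d ^ (m - k - l). \<Sum>a<d ^ l. \<Sum>x<d ^ k.
      A $$ (x + d ^ k * a + d ^ (k + l) * y, x + d ^ k * a + d ^ (k + l) * y))"
    by (rule sum.cong[OF refl], subst sum_lessThan_mult, simp add: power_add mult_ac)
  also have "\<dots> = (\<Sum>a<d ^ l. marg d m k l A $$ (a, a))"
    by (subst sum_rotate3) (simp add: marg_index)
  finally show ?thesis ..
qed

lemma density_op_marg:
  assumes D: "density_op (d ^ m) A" and kl: "k + l \<le> m"
  shows "density_op (d ^ l) (marg d m k l A)"
proof -
  obtain Q lam where Q: "unitary (d ^ m) Q" and A: "A = Q * diag_real_mat (d ^ m) lam * mat_adjoint Q"
    and nonneg: "\<And>j. j < d ^ m \<Longrightarrow> lam j \<ge> 0"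
    using density_op_spectral[OF D] by blast
  show ?thesis
    using marg_hermitian[OF D kl] marg_quadratic_form_nonneg[OF A unitaryD(1)[OF Q] nonneg kl]
      marg_trace[of A d m k l] D kl
    unfolding density_op_def by auto
qed

lemma marg_full: "A \<in> carrier_mat (d ^ m) (d ^ m) \<Longrightarrow> marg d m 0 m A = A"
  by (rule eq_matI) (auto simp: marg_def)

lemma marg_marg_prefix:
  assumes "a \<le> b" "b \<le> M"
  shows "marg d b 0 a (marg d M 0 b A) = marg d M 0 a A"
proof (rule eq_matI)
  fix s t assume "s < dim_row (marg d M 0 a A)" "t < dim_col (marg d M 0 a A)"
  then have st: "s < d ^ a" "t < d ^ a" by (auto simp: marg_def)
  have ba: "(d :: nat) ^ a * d ^ (b - a) = d ^ b" and mb: "(d :: nat) ^ (b - a) * d ^ (M - b) = d ^ (M - a)"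
    using assms by (simp_all flip: power_add)
  have lt: "s + d ^ a * y < d ^ b" if "s < d ^ a" "y < d ^ (b - a)" for s y
    using mixed_radix_index_less[OF that] ba by simp
  have "marg d b 0 a (marg d M 0 b A) $$ (s, t)
      = (\<Sum>y<d ^ (b - a). \<Sum>z<d ^ (M - b). A $$ (s + d ^ a * y + d ^ b * z, t + d ^ a * y + d ^ b * z))"
    using st lt by (simp add: marg_index)
  also have "\<dots> = (\<Sum>z<d ^ (M - b). \<Sum>y<d ^ (b - a). A $$ (s + d ^ a * y + d ^ b * z, t + d ^ a * y + d ^ b * z))"
    by (rule sum.swap)
  also have "\<dots> = (\<Sum>w<d ^ (b - a) * d ^ (M - b). A $$ (s + d ^ a * w, t + d ^ a * w))"
    by (subst sum_lessThan_mult) (simp add: algebra_simps flip: ba)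
  also have "\<dots> = marg d M 0 a A $$ (s, t)" using st by (simp add: marg_index mb)
  finally show "marg d b 0 a (marg d M 0 b A) $$ (s, t) = marg d M 0 a A $$ (s, t)" .
qed (auto simp: marg_def)

lemma marg_via_prefix:
  assumes "k + l \<le> M"
  shows "marg d M k l A = marg d (k + l) k l (marg d M 0 (k + l) A)"
proof (rule eq_matI)
  fix a b assume "a < dim_row (marg d (k + l) k l (marg d M 0 (k + l) A))"
    "b < dim_col (marg d (k + l) k l (marg d M 0 (k + l) A))"
  then have ab: "a < d ^ l" "b < d ^ l" by (auto simp: marg_def)
  have lt: "x + d ^ k * a < d ^ (k + l)" if "x < d ^ k" "a < d ^ l" for x a
    using mixed_radix_index_less[OF that] by (simp add: power_add)
  show "marg d M k l A $$ (a, b) = marg d (k + l) k l (marg d M 0 (k + l) A) $$ (a, b)"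
    using ab lt by (simp add: marg_index add_ac)
qed (auto simp: marg_def)

lemma partial_trace_last_marg:
  assumes "p + 1 \<le> M"
  shows "partial_trace_last (d ^ p) d (marg d M 0 (p + 1) A) = marg d M 0 p A"
proof -
  have "partial_trace_last (d ^ p) d (marg d M 0 (p + 1) A) = marg d (p + 1) 0 p (marg d M 0 (p + 1) A)"
  proof (rule eq_matI)
    fix a b assume "a < dim_row (marg d (p + 1) 0 p (marg d M 0 (p + 1) A))"
      "b < dim_col (marg d (p + 1) 0 p (marg d M 0 (p + 1) A))"
    then show "partial_trace_last (d ^ p) d (marg d M 0 (p + 1) A) $$ (a, b)
             = marg d (p + 1) 0 p (marg d M 0 (p + 1) A) $$ (a, b)"
      by (simp add: partial_trace_last_def marg_def)
  qed (auto simp: partial_trace_last_def marg_def)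
  then show ?thesis using marg_marg_prefix[of p "p + 1" M d A] assms by simp
qed

subsection \<open>Appending a maximally mixed factor\<close>

text \<open>tensor_id F d is F \<otimes> I_d, with F acting on the low digits as in tensor_maxmixed.\<close>

definition tensor_id :: "complex mat \<Rightarrow> nat \<Rightarrow> complex mat" where
  "tensor_id F d = mat (dim_row F * d) (dim_col F * d) (\<lambda>(s, t).
     if s div dim_row F = t div dim_col F then F $$ (s mod dim_row F, t mod dim_col F) else 0)"

lemma tensor_id_index:
  assumes F: "F \<in> carrier_mat P P" and x: "x < P" and b: "b < d" and t: "t < P * d"
  shows "tensor_id F d $$ (x + P * b, t) = (if b = t div P then F $$ (x, t mod P) else 0)"
    "tensor_id F d $$ (t, x + P * b) = (if t div P = b then F $$ (t mod P, x) else 0)"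
  using F x t mixed_radix_index_less[OF x b] by (auto simp: tensor_id_def)

lemma unitary_tensor_id:
  assumes F: "unitary P F"
  shows "unitary (P * d) (tensor_id F d)"
proof -
  note F = unitaryD[OF F] F
  define Q where "Q = tensor_id F d"
  have Q: "Q \<in> carrier_mat (P * d) (P * d)" using F by (simp add: Q_def tensor_id_def)
  have "mat_adjoint Q * Q = 1\<^sub>m (P * d)"
  proof (rule eq_matI)
    fix t t' assume "t < dim_row (1\<^sub>m (P * d))" "t' < dim_col (1\<^sub>m (P * d))"
    then have tt: "t < P * d" "t' < P * d" by auto
    then have P0: "P > 0" by (cases P) auto
    have div_less: "t div P < d" "t' div P < d" using tt by (simp_all add: less_mult_imp_div_less mult.commute)
    have "(mat_adjoint Q * Q) $$ (t, t') = (\<Sum>b<d. \<Sum>x<P. cnj (Q $$ (x + P * b, t)) * Q $$ (x + P * b, t'))"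
      using tt Q by (simp add: index_mult_mat_sum[of _ "P * d" "P * d" _ "P * d"] sum_lessThan_mult
          del: index_mult_mat)
    also have "\<dots> = (\<Sum>b<d. if b = t div P \<and> b = t' div P
                      then (\<Sum>x<P. cnj (F $$ (x, t mod P)) * F $$ (x, t' mod P)) else 0)"
      using tt by (intro sum.cong refl) (auto simp: Q_def tensor_id_index[OF F(1)])
    also have "\<dots> = (if t div P = t' div P then (\<Sum>x<P. cnj (F $$ (x, t mod P)) * F $$ (x, t' mod P)) else 0)"
      using div_less by (cases "t div P = t' div P") (auto simp: sum.delta intro!: sum.neutral)
    also have "\<dots> = 1\<^sub>m (P * d) $$ (t, t')"
      using unitary_cols_orthonormal[OF F(4), of "t mod P" "t' mod P"] P0 tt
      by (auto, metis div_mult_mod_eq)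
    finally show "(mat_adjoint Q * Q) $$ (t, t') = 1\<^sub>m (P * d) $$ (t, t')" .
  qed (use Q in auto)
  then show ?thesis using Q by (simp add: unitary_def Q_def)
qed

lemma tensor_maxmixed_unitary_conj:
  assumes F: "unitary (d ^ p) F" and B: "B = F * diag_real_mat (d ^ p) bet * mat_adjoint F"
  shows "tensor_maxmixed d p B = tensor_id F d
           * diag_real_mat (d ^ p * d) (\<lambda>t. bet (t mod d ^ p) / real d) * mat_adjoint (tensor_id F d)"
    (is "_ = ?Q * diag_real_mat _ ?lam * _")
proof (rule eq_matI)
  let ?P = "d ^ p"
  note F = unitaryD[OF F]
  have Q: "?Q \<in> carrier_mat (?P * d) (?P * d)" using F by (simp add: tensor_id_def)
  fix s s' assume "s < dim_row (?Q * diag_real_mat (?P * d) ?lam * mat_adjoint ?Q)"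
    "s' < dim_col (?Q * diag_real_mat (?P * d) ?lam * mat_adjoint ?Q)"
  then have ss: "s < ?P * d" "s' < ?P * d" using Q by auto
  have div_less: "s div ?P < d" using ss by (simp add: less_mult_imp_div_less mult.commute)
  have "(?Q * diag_real_mat (?P * d) ?lam * mat_adjoint ?Q) $$ (s, s')
      = (\<Sum>b<d. \<Sum>x<?P. ?Q $$ (s, x + ?P * b) * of_real (?lam (x + ?P * b)) * cnj (?Q $$ (s', x + ?P * b)))"
    by (simp add: index_conj_diag[OF Q ss] sum_lessThan_mult)
  also have "\<dots> = (\<Sum>b<d. if s div ?P = b \<and> s' div ?P = b
       then (\<Sum>x<?P. F $$ (s mod ?P, x) * of_real (bet x) * cnj (F $$ (s' mod ?P, x))) / of_nat d else 0)"
    using ss by (intro sum.cong refl) (auto simp: tensor_id_index[OF F(1)] sum_divide_distrib)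
  also have "\<dots> = (if s div ?P = s' div ?P then B $$ (s mod ?P, s' mod ?P) / of_nat d else 0)"
    using div_less F(1) unfolding B
    by (auto simp: sum.delta index_conj_diag simp del: index_mult_mat)
  also have "\<dots> = tensor_maxmixed d p B $$ (s, s')"
    using ss by (simp add: tensor_maxmixed_def mult.commute)
  finally show "tensor_maxmixed d p B $$ (s, s') = (?Q * diag_real_mat (?P * d) ?lam * mat_adjoint ?Q) $$ (s, s')"
    by simp
qed (use unitaryD(1)[OF F] in \<open>auto simp: tensor_maxmixed_def tensor_id_def mult.commute\<close>)

lemma vn_entropy_tensor_maxmixed:
  assumes D: "density_op (d ^ p) B" and d: "d > 0"
  shows "vn_entropy (tensor_maxmixed d p B) = vn_entropy B + ln (real d)"
proof -
  let ?P = "d ^ p"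
  obtain F bet where F: "unitary ?P F" and B: "B = F * diag_real_mat ?P bet * mat_adjoint F"
    and nonneg: "\<And>k. k < ?P \<Longrightarrow> bet k \<ge> 0" and sum: "(\<Sum>k<?P. bet k) = 1"
    using density_op_spectral[OF D] by blast
  have entry: "- (bet x / real d * ln (bet x / real d)) = (- (bet x * ln (bet x)) + bet x * ln (real d)) / real d"
    if "x < ?P" for x
  proof (cases "bet x = 0")
    case False
    then have "bet x > 0" using nonneg[OF that] by simp
    then show ?thesis using d by (simp add: ln_div field_simps)
  qed simp
  have "vn_entropy (tensor_maxmixed d p B)
      = (\<Sum>t<?P * d. - (bet (t mod ?P) / real d * ln (bet (t mod ?P) / real d)))"
    by (rule vn_entropy_unitary_conj[OF unitary_tensor_id[OF F] tensor_maxmixed_unitary_conj[OF F B]])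
  also have "\<dots> = (\<Sum>b<d. \<Sum>x<?P. (- (bet x * ln (bet x)) + bet x * ln (real d)) / real d)"
    unfolding sum_lessThan_mult by (intro sum.cong refl) (use entry in simp)
  also have "\<dots> = (\<Sum>x<?P. - (bet x * ln (bet x)) + bet x * ln (real d))"
    using d by (simp add: sum_divide_distrib[symmetric])
  also have "\<dots> = (\<Sum>x<?P. - (bet x * ln (bet x))) + ln (real d) * (\<Sum>x<?P. bet x)"
    unfolding sum_distrib_left sum.distrib[symmetric] by (simp add: mult.commute)
  finally show ?thesis using sum by (simp add: vn_entropy_unitary_conj[OF F B])
qed

subsection \<open>The upper bound\<close>

lemma process_tensor_prefix_entropy_step:
  assumes U: "process_tensor d n U" and d: "d > 0" and j: "j < n"
  shows "vn_entropy (marg d (2 * n) 0 (2 * j) U) \<le> vn_entropy (marg d (2 * n) 0 (2 * (j + 1)) U)"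
proof -
  have D: "density_op (d ^ (2 * n)) U" using U by (simp add: process_tensor_def)
  have "\<forall>i\<in>{1..n}. marg d (2 * n) 0 (2 * i - 1) U = tensor_maxmixed d (2 * i - 2) (marg d (2 * n) 0 (2 * i - 2) U)"
    using U by (simp add: process_tensor_def)
  then have causal: "marg d (2 * n) 0 (2 * (j + 1) - 1) U
                   = tensor_maxmixed d (2 * (j + 1) - 2) (marg d (2 * n) 0 (2 * (j + 1) - 2) U)"
    by (rule bspec) (use j in auto)
  have "density_op (d ^ (2 * j + 1) * d) (marg d (2 * n) 0 (2 * (j + 1)) U)"
    using density_op_marg[OF D, of 0 "2 * (j + 1)"] j by (simp add: mult.commute)
  then have "vn_entropy (partial_trace_last (d ^ (2 * j + 1)) d (marg d (2 * n) 0 (2 * j + 1 + 1) U))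
      \<le> vn_entropy (marg d (2 * n) 0 (2 * (j + 1)) U) + ln (real d)"
    using vn_entropy_partial_trace_last_le[OF _ d] by simp
  moreover have "partial_trace_last (d ^ (2 * j + 1)) d (marg d (2 * n) 0 (2 * j + 1 + 1) U)
      = tensor_maxmixed d (2 * j) (marg d (2 * n) 0 (2 * j) U)"
    using partial_trace_last_marg[of "2 * j + 1" "2 * n" d U] causal j by simp
  moreover have "vn_entropy (tensor_maxmixed d (2 * j) (marg d (2 * n) 0 (2 * j) U))
      = vn_entropy (marg d (2 * n) 0 (2 * j) U) + ln (real d)"
    using vn_entropy_tensor_maxmixed[OF density_op_marg[OF D] d] j by simp
  ultimately show ?thesis by simp
qed

lemma process_tensor_first_pair_entropy_le:
  assumes U: "process_tensor d n U" and d: "d > 0" and n: "n \<ge> 1"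
  shows "vn_entropy (marg d (2 * n) 0 2 U) \<le> vn_entropy U"
proof -
  have "vn_entropy (marg d (2 * n) 0 (2 * 1) U) \<le> vn_entropy (marg d (2 * n) 0 (2 * j) U)"
    if "1 \<le> j" "j \<le> n" for j
    using that
  proof (induction j rule: dec_induct)
    case (step j)
    then show ?case
      using process_tensor_prefix_entropy_step[OF U d, of j] by simp
  qed simp
  moreover have "marg d (2 * n) 0 (2 * n) U = U"
    using U by (intro marg_full) (simp add: process_tensor_def density_op_def)
  ultimately show ?thesis using n by fastforce
qed

lemma vn_entropy_marg_le:
  assumes "density_op (d ^ m) A" "k + l \<le> m" "d > 0"
  shows "vn_entropy (marg d m k l A) \<le> real l * ln (real d)"
  using vn_entropy_le_ln_dim[OF density_op_marg[OF assms(1,2)]] assms(3) by (simp add: ln_realpow)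

theorem non_markovianity_le:
  assumes n: "n \<ge> 1" and d: "d > 0" and U: "process_tensor d n U"
  shows "non_markovianity d n U \<le> 2 * (real n - 1) * ln (real d)"
proof -
  have D: "density_op (d ^ (2 * n)) U" using U by (simp add: process_tensor_def)
  have "vn_entropy (marg d (2 * n) (2 * j - 2) 2 U) \<le> 2 * ln (real d)" if "j \<in> {2..n}" for j
  proof -
    have "2 * j - 2 + 2 \<le> 2 * n" using that by auto
    then show ?thesis using vn_entropy_marg_le[OF D _ d] by fastforce
  qed
  then have "(\<Sum>j = 2..n. vn_entropy (marg d (2 * n) (2 * j - 2) 2 U)) \<le> (\<Sum>j = 2..n. 2 * ln (real d))"
    by (rule sum_mono)
  moreover have "{1..n} = insert 1 {2..n}" using n by auto
  ultimately show ?thesis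
    using process_tensor_first_pair_entropy_le[OF U d n] n
    by (simp add: non_markovianity_def of_nat_diff algebra_simps)
qed

subsection \<open>A process tensor attaining the bound\<close>

lemma unitary_conj_mult_self:
  assumes Q: "unitary n Q" and D: "D \<in> carrier_mat n n"
  shows "(Q * D * mat_adjoint Q) * (Q * D * mat_adjoint Q) = Q * (D * D) * mat_adjoint Q"
  using unitaryD[OF Q] D unitary_cancel_left[OF Q mult_carrier_mat[OF D mat_adjoint_carrier[OF unitaryD(1)[OF Q]]]]
  by (simp add: assoc_mult_mat[of _ n n _ n _ n])

lemma unitary_conj_smult:
  assumes Q: "Q \<in> carrier_mat n n" and D: "D \<in> carrier_mat n n"
  shows "Q * (c \<cdot>\<^sub>m D) * mat_adjoint Q = c \<cdot>\<^sub>m (Q * D * mat_adjoint Q)"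
  using mult_smult_distrib[OF Q D] mult_smult_assoc_mat[OF mult_carrier_mat[OF Q D] mat_adjoint_carrier[OF Q]]
  by simp

lemma scaled_projection_spectrum:
  assumes Q: "unitary n Q" and A: "A = Q * diag_real_mat n l * mat_adjoint Q"
    and sq: "A * A = complex_of_real c \<cdot>\<^sub>m A" and k: "k < n"
  shows "l k = 0 \<or> l k = c"
proof -
  let ?D = "diag_real_mat n l"
  have "Q * (?D * ?D) * mat_adjoint Q = Q * (complex_of_real c \<cdot>\<^sub>m ?D) * mat_adjoint Q"
    using sq unfolding A unitary_conj_mult_self[OF Q diag_real_mat_carrier]
    by (simp add: unitary_conj_smult[OF unitaryD(1)[OF Q]])
  moreover have "?D * ?D = mat_adjoint Q * (Q * (?D * ?D) * mat_adjoint Q) * Q"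
    by (rule unitary_conj_cancel[OF Q mult_carrier_mat[OF diag_real_mat_carrier diag_real_mat_carrier] refl, symmetric])
  moreover have "mat_adjoint Q * (Q * (complex_of_real c \<cdot>\<^sub>m ?D) * mat_adjoint Q) * Q = complex_of_real c \<cdot>\<^sub>m ?D"
    by (rule unitary_conj_cancel[OF Q _ refl]) simp
  ultimately have "?D * ?D = complex_of_real c \<cdot>\<^sub>m ?D" by simp
  then have "(?D * ?D) $$ (k, k) = (complex_of_real c \<cdot>\<^sub>m ?D) $$ (k, k)" by simp
  then have "complex_of_real (l k * l k) = complex_of_real (c * l k)"
    using k by (simp add: index_mult_mat_sum[of _ n n _ n] diag_real_mat_def sum.delta if_distrib
        cong: if_cong del: index_mult_mat)
  then show ?thesis by (simp only: of_real_eq_iff) auto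
qed

lemma scaled_projection_state:
  assumes A: "A \<in> carrier_mat n n" and herm: "mat_adjoint A = A"
    and sq: "A * A = complex_of_real c \<cdot>\<^sub>m A" and c: "c > 0" and tr: "(\<Sum>i<n. A $$ (i, i)) = 1"
  shows "density_op n A" "vn_entropy A = - ln c"
proof -
  obtain Q l where Q: "unitary n Q" and Ad: "A = Q * diag_real_mat n l * mat_adjoint Q"
    using hermitian_spectral_decomposition[OF A herm] by blast
  have l: "l k = 0 \<or> l k = c" if "k < n" for k by (rule scaled_projection_spectrum[OF Q Ad sq that])
  have sum: "(\<Sum>k<n. l k) = 1" using trace_unitary_conj[OF Q Ad] tr by (metis of_real_eq_1_iff)
  show "density_op n A" using l c by (intro density_op_unitary_conj[OF Q Ad _ sum]) force
  have "vn_entropy A = (\<Sum>k<n. l k * (- ln c))"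
    unfolding vn_entropy_unitary_conj[OF Q Ad] by (intro sum.cong refl) (use l in force)
  then show "vn_entropy A = - ln c" using sum by (simp add: sum_negf sum_distrib_right[symmetric])
qed

definition maxmixed :: "nat \<Rightarrow> complex mat" where
  "maxmixed m = mat m m (\<lambda>(a, b). if a = b then complex_of_real (1 / real m) else 0)"

lemma maxmixed_state:
  assumes "m > 0"
  shows "density_op m (maxmixed m)" "vn_entropy (maxmixed m) = ln (real m)"
proof -
  have C: "maxmixed m \<in> carrier_mat m m" by (simp add: maxmixed_def)
  have herm: "mat_adjoint (maxmixed m) = maxmixed m" by (rule eq_matI) (auto simp: maxmixed_def)
  have sq: "maxmixed m * maxmixed m = complex_of_real (1 / real m) \<cdot>\<^sub>m maxmixed m"
  proof (rule eq_matI)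
    fix a b assume "a < dim_row (complex_of_real (1 / real m) \<cdot>\<^sub>m maxmixed m)"
      "b < dim_col (complex_of_real (1 / real m) \<cdot>\<^sub>m maxmixed m)"
    then have ab: "a < m" "b < m" by (auto simp: maxmixed_def)
    have "(maxmixed m * maxmixed m) $$ (a, b) = (\<Sum>r<m. maxmixed m $$ (a, r) * maxmixed m $$ (r, b))"
      using ab C by (intro index_mult_mat_sum) auto
    also have "\<dots> = (\<Sum>r<m. if r = a then (if a = b then complex_of_real (1 / real m) * complex_of_real (1 / real m) else 0) else 0)"
      using ab by (intro sum.cong refl) (auto simp: maxmixed_def)
    finally show "(maxmixed m * maxmixed m) $$ (a, b) = (complex_of_real (1 / real m) \<cdot>\<^sub>m maxmixed m) $$ (a, b)"
      using ab by (simp add: maxmixed_def sum.delta)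
  qed (auto simp: maxmixed_def)
  have tr: "(\<Sum>i<m. maxmixed m $$ (i, i)) = 1" using assms by (simp add: maxmixed_def)
  show "density_op m (maxmixed m)" "vn_entropy (maxmixed m) = ln (real m)"
    using scaled_projection_state[OF C herm sq _ tr] assms by (simp_all add: ln_div)
qed

text \<open>The extremal process keeps o_1 and i_(N-1) maximally mixed and sends each input i_(j-1)
  unchanged to the output o_(j+1) two steps later, so its Choi state is the tensor product of
  I/d on o_1, I/d on i_(N-1) and a maximally entangled state on each pair i_(j-1) o_(j+1).
  In the digit encoding o_1 is digit 1 and i_(N-1) is digit 2N - 2, and delay_chain d N s
  says that o_(j+1) = i_(j-1) in s for all 1 \<le> j < N.\<close>

definition last_input :: "nat \<Rightarrow> nat \<Rightarrow> nat \<Rightarrow> nat" where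
  "last_input d N s = s div d ^ (2 * N - 2) mod d"

definition first_output :: "nat \<Rightarrow> nat \<Rightarrow> nat" where
  "first_output d s = s div d mod d"

fun delay_chain :: "nat \<Rightarrow> nat \<Rightarrow> nat \<Rightarrow> bool" where
  "delay_chain d 0 s = True"
| "delay_chain d (Suc N) s = (N = 0 \<or>
     delay_chain d N (s mod d ^ (2 * N)) \<and> last_input d N (s mod d ^ (2 * N)) = s div d ^ (2 * N) div d)"

lemma first_output_less: "d > 0 \<Longrightarrow> first_output d s < d"
  by (simp add: first_output_def)

lemma last_input_less: "d > 0 \<Longrightarrow> last_input d N s < d"
  by (simp add: last_input_def)

lemma delay_chain_append:
  assumes "N \<ge> 1" "s < d ^ (2 * N)" "x < d"
  shows "delay_chain d (Suc N) (s + d ^ (2 * N) * (x + d * y)) = (delay_chain d N s \<and> last_input d N s = y)"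
  using assms by (cases N) auto

lemma last_input_append:
  assumes "s < d ^ (2 * N)" "x < d"
  shows "last_input d (Suc N) (s + d ^ (2 * N) * (x + d * y)) = x"
  using assms by (simp add: last_input_def)

lemma first_output_append:
  assumes N: "N \<ge> 1" and d: "d > 0"
  shows "first_output d (s + d ^ (2 * N) * z) = first_output d s"
proof -
  have "2 * N = Suc (Suc (2 * N - 2))" using N by simp
  then have "d ^ (2 * N) = d * (d * d ^ (2 * N - 2))" by (metis power_Suc)
  then have "(s + d ^ (2 * N) * z) div d = s div d + d * (d ^ (2 * N - 2) * z)"
    using d by (simp add: mult.assoc)
  then show ?thesis unfolding first_output_def by simp
qed

lemma indicator_split_fiber:
  assumes "v < (d :: nat)"
  shows "(if P then 1 else 0 :: real) = (\<Sum>a<d. if P \<and> a = v then 1 else 0)"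
proof (cases P)
  case True
  then have "(\<Sum>a<d. if P \<and> a = v then 1 else 0) = (\<Sum>a<d. if a = v then 1 else (0 :: real))"
    by simp
  then show ?thesis using True assms by (simp add: sum.delta)
qed simp

lemma delay_chain_count:
  assumes N: "N \<ge> 1" and d: "d > 0" and \<alpha>: "\<alpha> < d" and \<beta>: "\<beta> < d"
  shows "(\<Sum>r<d ^ (2 * N). if delay_chain d N r \<and> first_output d r = \<alpha> \<and> last_input d N r = \<beta> then 1 else 0)
       = real d ^ (N - 1)"
  using N \<beta>
proof (induction N arbitrary: \<beta> rule: dec_induct)
  case base
  have "(\<Sum>r<d ^ (2 * 1). if delay_chain d 1 r \<and> first_output d r = \<alpha> \<and> last_input d 1 r = \<beta> then 1 else 0)
      = (\<Sum>y<d. \<Sum>x<d. if y = \<alpha> \<and> x = \<beta> then 1 else (0 :: real))"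
    using d by (simp add: power2_eq_square sum_lessThan_mult first_output_def last_input_def)
  also have "\<dots> = 1"
    using indicator_split_fiber[OF \<alpha>, of True] indicator_split_fiber[OF base, of "_ = \<alpha>"] by simp
  finally show ?case by simp
next
  case (step N)
  let ?D = "d ^ (2 * N)"
  let ?P = "\<lambda>y s. delay_chain d N s \<and> first_output d s = \<alpha> \<and> last_input d N s = y"
  have "d ^ (2 * Suc N) = ?D * (d * d)" by (simp add: power_add mult_ac)
  then have "(\<Sum>r<d ^ (2 * Suc N). if delay_chain d (Suc N) r \<and> first_output d r = \<alpha> \<and> last_input d (Suc N) r = \<beta> then 1 else 0)
      = (\<Sum>y<d. \<Sum>x<d. \<Sum>s<?D. if delay_chain d (Suc N) (s + ?D * (x + d * y))
           \<and> first_output d (s + ?D * (x + d * y)) = \<alpha> \<and> last_input d (Suc N) (s + ?D * (x + d * y)) = \<beta>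
           then 1 else 0)"
    by (simp only: sum_lessThan_mult)
  also have "\<dots> = (\<Sum>y<d. \<Sum>x<d. if x = \<beta> then (\<Sum>s<?D. if ?P y s then 1 else 0) else (0 :: real))"
    using step.hyps d
    by (intro sum.cong refl) (auto simp: delay_chain_append last_input_append first_output_append conj_ac)
  also have "\<dots> = (\<Sum>y<d. \<Sum>s<?D. if ?P y s then 1 else 0)"
    using step.prems by (simp add: sum.delta)
  also have "\<dots> = real d ^ (Suc N - 1)" using step.IH step.hyps by (cases N) auto
  finally show ?case .
qed

lemma delay_chain_count_last:
  assumes N: "N \<ge> 1" and d: "d > 0" and \<beta>: "\<beta> < d"
  shows "(\<Sum>r<d ^ (2 * N). if delay_chain d N r \<and> last_input d N r = \<beta> then 1 else 0) = real d ^ N"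
proof -
  have "(\<Sum>r<d ^ (2 * N). if delay_chain d N r \<and> last_input d N r = \<beta> then 1 else 0 :: real)
      = (\<Sum>r<d ^ (2 * N). \<Sum>\<alpha><d. if delay_chain d N r \<and> first_output d r = \<alpha> \<and> last_input d N r = \<beta> then 1 else 0)"
  proof (intro sum.cong refl)
    fix r
    show "(if delay_chain d N r \<and> last_input d N r = \<beta> then 1 else 0 :: real)
        = (\<Sum>\<alpha><d. if delay_chain d N r \<and> first_output d r = \<alpha> \<and> last_input d N r = \<beta> then 1 else 0)"
      by (subst indicator_split_fiber[OF first_output_less[OF d, of r]]) (auto intro!: sum.cong)
  qed
  also have "\<dots> = (\<Sum>\<alpha><d. \<Sum>r<d ^ (2 * N). if delay_chain d N r \<and> first_output d r = \<alpha> \<and> last_input d N r = \<beta> then 1 else 0)"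
    by (rule sum.swap)
  also have "\<dots> = real d * real d ^ (N - 1)" using delay_chain_count[OF N d _ \<beta>] by simp
  finally show ?thesis using N by (simp flip: power_Suc)
qed

definition delay_entry :: "nat \<Rightarrow> nat \<Rightarrow> nat \<Rightarrow> nat \<Rightarrow> real" where
  "delay_entry d N s t = (if delay_chain d N s \<and> delay_chain d N t \<and> first_output d s = first_output d t
     \<and> last_input d N s = last_input d N t then 1 / real d ^ (N + 1) else 0)"

definition delay_process :: "nat \<Rightarrow> nat \<Rightarrow> complex mat" where
  "delay_process d N = mat (d ^ (2 * N)) (d ^ (2 * N)) (\<lambda>(s, t). complex_of_real (delay_entry d N s t))"

lemma delay_process_carrier [simp]: "delay_process d N \<in> carrier_mat (d ^ (2 * N)) (d ^ (2 * N))"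
  by (simp add: delay_process_def)

lemma delay_process_dim [simp]:
  "dim_row (delay_process d N) = d ^ (2 * N)" "dim_col (delay_process d N) = d ^ (2 * N)"
  by (simp_all add: delay_process_def)

lemma delay_entry_square:
  assumes N: "N \<ge> 1" and d: "d > 0"
  shows "(\<Sum>r<d ^ (2 * N). delay_entry d N s r * delay_entry d N r t) = delay_entry d N s t / real d ^ 2"
proof -
  let ?c = "1 / real d ^ (N + 1)"
  have "(\<Sum>r<d ^ (2 * N). delay_entry d N s r * delay_entry d N r t)
      = (if delay_entry d N s t = 0 then 0 else ?c * ?c) * (\<Sum>r<d ^ (2 * N).
          if delay_chain d N r \<and> first_output d r = first_output d s \<and> last_input d N r = last_input d N s then 1 else 0)"
    using d by (auto simp: delay_entry_def sum_distrib_left intro!: sum.cong)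
  also have "\<dots> = (if delay_entry d N s t = 0 then 0 else ?c * ?c) * real d ^ (N - 1)"
    using delay_chain_count[OF N d first_output_less[OF d] last_input_less[OF d]] by simp
  also have "\<dots> = delay_entry d N s t / real d ^ 2"
  proof -
    have "real d ^ (N - 1) * real d ^ 2 = real d ^ (N + 1)" using N by (simp flip: power_add)
    then have "?c * ?c * real d ^ (N - 1) = ?c / real d ^ 2" using d by (simp add: field_simps)
    then show ?thesis unfolding delay_entry_def by simp
  qed
  finally show ?thesis .
qed

lemma delay_entry_trace:
  assumes N: "N \<ge> 1" and d: "d > 0"
  shows "(\<Sum>s<d ^ (2 * N). delay_entry d N s s) = 1"
proof -
  have "(\<Sum>s<d ^ (2 * N). if delay_chain d N s then 1 else 0 :: real)
      = (\<Sum>s<d ^ (2 * N). \<Sum>\<beta><d. if delay_chain d N s \<and> last_input d N s = \<beta> then 1 else 0)"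
  proof (intro sum.cong refl)
    fix s
    show "(if delay_chain d N s then 1 else 0 :: real)
        = (\<Sum>\<beta><d. if delay_chain d N s \<and> last_input d N s = \<beta> then 1 else 0)"
      by (subst indicator_split_fiber[OF last_input_less[OF d, of N s]]) (auto intro!: sum.cong)
  qed
  also have "\<dots> = (\<Sum>\<beta><d. \<Sum>s<d ^ (2 * N). if delay_chain d N s \<and> last_input d N s = \<beta> then 1 else 0)"
    by (rule sum.swap)
  also have "\<dots> = real d * real d ^ N" using delay_chain_count_last[OF N d] by simp
  finally have "(\<Sum>s<d ^ (2 * N). if delay_chain d N s then 1 else 0) = real d ^ (N + 1)" by simp
  moreover have "(\<Sum>s<d ^ (2 * N). delay_entry d N s s)
      = 1 / real d ^ (N + 1) * (\<Sum>s<d ^ (2 * N). if delay_chain d N s then 1 else 0)"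
    by (simp add: delay_entry_def sum_distrib_left if_distrib cong: if_cong)
  ultimately show ?thesis using d by simp
qed

lemma delay_entry_append:
  assumes N: "N \<ge> 1" and d: "d > 0" and s: "s < d ^ (2 * N)" and t: "t < d ^ (2 * N)"
    and x: "x < d" and x': "x' < d"
  shows "delay_entry d (Suc N) (s + d ^ (2 * N) * (x + d * y)) (t + d ^ (2 * N) * (x' + d * y')) =
    (if delay_chain d N s \<and> last_input d N s = y \<and> delay_chain d N t \<and> last_input d N t = y'
       \<and> first_output d s = first_output d t \<and> x = x' then 1 / real d ^ (N + 2) else 0)"
  unfolding delay_entry_def using assms
  by (simp add: delay_chain_append last_input_append first_output_append)

lemma delay_entry_sum_last_output:
  assumes N: "N \<ge> 1" and d: "d > 0" and s: "s < d ^ (2 * N)" and t: "t < d ^ (2 * N)"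
    and x: "x < d" and x': "x' < d"
  shows "(\<Sum>y<d. delay_entry d (Suc N) (s + d ^ (2 * N) * (x + d * y)) (t + d ^ (2 * N) * (x' + d * y)))
       = (if x = x' then delay_entry d N s t / real d else 0)"
proof -
  let ?A = "delay_chain d N s \<and> delay_chain d N t \<and> first_output d s = first_output d t
    \<and> last_input d N s = last_input d N t"
  have "(\<Sum>y<d. delay_entry d (Suc N) (s + d ^ (2 * N) * (x + d * y)) (t + d ^ (2 * N) * (x' + d * y)))
      = (\<Sum>y<d. if y = last_input d N s then (if ?A \<and> x = x' then 1 / real d ^ (N + 2) else 0) else 0)"
    using assms by (intro sum.cong refl, subst delay_entry_append) auto
  also have "\<dots> = (if ?A \<and> x = x' then 1 / real d ^ (N + 2) else 0)"
    using last_input_less[OF d] by (simp add: sum.delta)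
  also have "\<dots> = (if x = x' then delay_entry d N s t / real d else 0)"
    using d by (simp add: delay_entry_def)
  finally show ?thesis .
qed

lemma delay_entry_sum_last_pair:
  assumes N: "N \<ge> 1" and d: "d > 0" and s: "s < d ^ (2 * N)" and t: "t < d ^ (2 * N)"
  shows "(\<Sum>z<d * d. delay_entry d (Suc N) (s + d ^ (2 * N) * z) (t + d ^ (2 * N) * z)) = delay_entry d N s t"
proof -
  have "(\<Sum>z<d * d. delay_entry d (Suc N) (s + d ^ (2 * N) * z) (t + d ^ (2 * N) * z))
      = (\<Sum>y<d. \<Sum>x<d. delay_entry d (Suc N) (s + d ^ (2 * N) * (x + d * y)) (t + d ^ (2 * N) * (x + d * y)))"
    by (rule sum_lessThan_mult)
  also have "\<dots> = (\<Sum>x<d. \<Sum>y<d. delay_entry d (Suc N) (s + d ^ (2 * N) * (x + d * y)) (t + d ^ (2 * N) * (x + d * y)))"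
    by (rule sum.swap)
  also have "\<dots> = (\<Sum>x<d. delay_entry d N s t / real d)"
    using assms by (simp add: delay_entry_sum_last_output)
  finally show ?thesis using d by simp
qed

lemma delay_entry_sum_prefix:
  assumes N: "N \<ge> 1" and d: "d > 0" and a: "a < d * d" and b: "b < d * d"
  shows "(\<Sum>x<d ^ (2 * N). delay_entry d (Suc N) (x + d ^ (2 * N) * a) (x + d ^ (2 * N) * b))
       = (if a = b then 1 / real d ^ 2 else 0)"
proof -
  have split: "a = a mod d + d * (a div d)" "b = b mod d + d * (b div d)" by simp_all
  have "a div d < d" using a by (simp add: less_mult_imp_div_less)
  have eq: "(a mod d = b mod d \<and> a div d = b div d) = (a = b)" by (metis split)
  have "(\<Sum>x<d ^ (2 * N). delay_entry d (Suc N) (x + d ^ (2 * N) * a) (x + d ^ (2 * N) * b))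
      = (\<Sum>x<d ^ (2 * N). delay_entry d (Suc N) (x + d ^ (2 * N) * (a mod d + d * (a div d)))
                                                (x + d ^ (2 * N) * (b mod d + d * (b div d))))"
    using split by simp
  also have "\<dots> = (\<Sum>x<d ^ (2 * N). if a = b then
      (if delay_chain d N x \<and> last_input d N x = a div d then 1 / real d ^ (N + 2) else 0) else 0)"
    using N d by (intro sum.cong refl, subst delay_entry_append) (auto simp: eq[symmetric])
  also have "\<dots> = (if a = b then 1 / real d ^ (N + 2) else 0)
        * (\<Sum>x<d ^ (2 * N). if delay_chain d N x \<and> last_input d N x = a div d then 1 else 0)"
    by (cases "a = b") (auto simp: sum_distrib_left intro!: sum.cong)
  also have "\<dots> = (if a = b then 1 / real d ^ (N + 2) * real d ^ N else 0)"
    using delay_chain_count_last[OF N d \<open>a div d < d\<close>] by simp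
  also have "\<dots> = (if a = b then 1 / real d ^ 2 else 0)"
    using d by (simp add: power_add power2_eq_square)
  finally show ?thesis .
qed

lemma delay_entry_one:
  assumes d: "d > 0" and a: "a < d * d" and b: "b < d * d"
  shows "delay_entry d 1 a b = (if a = b then 1 / real d ^ 2 else 0)"
proof -
  have "a div d < d" "b div d < d" using a b by (simp_all add: less_mult_imp_div_less)
  moreover have "(a div d = b div d \<and> a mod d = b mod d) = (a = b)"
    by (metis div_mult_mod_eq)
  ultimately show ?thesis
    unfolding delay_entry_def first_output_def last_input_def by (simp add: power2_eq_square)
qed

lemma delay_process_state:
  assumes N: "N \<ge> 1" and d: "d > 0"
  shows "density_op (d ^ (2 * N)) (delay_process d N)" "vn_entropy (delay_process d N) = 2 * ln (real d)"
proof -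
  let ?U = "delay_process d N"
  have herm: "mat_adjoint ?U = ?U"
    by (rule eq_matI) (auto simp: delay_process_def delay_entry_def)
  have sq: "?U * ?U = complex_of_real (1 / real d ^ 2) \<cdot>\<^sub>m ?U"
  proof (rule eq_matI)
    fix s t assume "s < dim_row (complex_of_real (1 / real d ^ 2) \<cdot>\<^sub>m ?U)"
      "t < dim_col (complex_of_real (1 / real d ^ 2) \<cdot>\<^sub>m ?U)"
    then have st: "s < d ^ (2 * N)" "t < d ^ (2 * N)" by auto
    have "(?U * ?U) $$ (s, t) = complex_of_real (\<Sum>r<d ^ (2 * N). delay_entry d N s r * delay_entry d N r t)"
      using st by (simp add: index_mult_mat_sum[of _ "d ^ (2 * N)" "d ^ (2 * N)" _ "d ^ (2 * N)"]
          delay_process_def del: index_mult_mat)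
    then show "(?U * ?U) $$ (s, t) = (complex_of_real (1 / real d ^ 2) \<cdot>\<^sub>m ?U) $$ (s, t)"
      using st by (simp add: delay_entry_square[OF N d] delay_process_def)
  qed auto
  have tr: "(\<Sum>i<d ^ (2 * N). ?U $$ (i, i)) = 1"
    using delay_entry_trace[OF N d] by (simp add: delay_process_def flip: of_real_sum)
  show "density_op (d ^ (2 * N)) ?U" using scaled_projection_state(1)[OF delay_process_carrier herm sq _ tr] d by simp
  have "- ln (1 / real d ^ 2) = 2 * ln (real d)" using d by (simp add: ln_div ln_realpow)
  then show "vn_entropy ?U = 2 * ln (real d)"
    using scaled_projection_state(2)[OF delay_process_carrier herm sq _ tr] d by simp
qed

lemma delay_process_marg_last_pair:
  assumes N: "N \<ge> 1" and d: "d > 0"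
  shows "marg d (2 * Suc N) 0 (2 * N) (delay_process d (Suc N)) = delay_process d N"
proof (rule eq_matI)
  fix a b assume "a < dim_row (delay_process d N)" "b < dim_col (delay_process d N)"
  then have ab: "a < d ^ (2 * N)" "b < d ^ (2 * N)" by auto
  have lt: "a + d ^ (2 * N) * z < d ^ (2 * Suc N)" if "a < d ^ (2 * N)" "z < d * d" for a z
    using mixed_radix_index_less[OF that] by (simp add: power_add mult_ac)
  have "marg d (2 * Suc N) 0 (2 * N) (delay_process d (Suc N)) $$ (a, b)
      = complex_of_real (\<Sum>z<d * d. delay_entry d (Suc N) (a + d ^ (2 * N) * z) (b + d ^ (2 * N) * z))"
    using ab lt by (simp add: marg_index power2_eq_square delay_process_def)
  then show "marg d (2 * Suc N) 0 (2 * N) (delay_process d (Suc N)) $$ (a, b) = delay_process d N $$ (a, b)"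
    using delay_entry_sum_last_pair[OF N d ab] ab by (simp add: delay_process_def)
qed (auto simp: marg_def)

lemma delay_process_marg_prefix:
  assumes j: "1 \<le> j" "j \<le> N" and d: "d > 0"
  shows "marg d (2 * N) 0 (2 * j) (delay_process d N) = delay_process d j"
  using j(2)
proof (induction N rule: dec_induct)
  case (step N)
  then show ?case
    using marg_marg_prefix[of "2 * j" "2 * N" "2 * Suc N" d "delay_process d (Suc N)"]
      delay_process_marg_last_pair[of N d] j d by simp
qed (simp add: marg_full)

lemma delay_process_causal:
  assumes N: "N \<ge> 1" and d: "d > 0"
  shows "marg d (2 * Suc N) 0 (2 * N + 1) (delay_process d (Suc N)) = tensor_maxmixed d (2 * N) (delay_process d N)"
proof (rule eq_matI)
  let ?D = "d ^ (2 * N)"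
  fix a b assume "a < dim_row (tensor_maxmixed d (2 * N) (delay_process d N))"
    "b < dim_col (tensor_maxmixed d (2 * N) (delay_process d N))"
  then have ab: "a < d ^ (2 * N + 1)" "b < d ^ (2 * N + 1)" by (auto simp: tensor_maxmixed_def)
  have div: "a div ?D < d" "b div ?D < d" using ab by (auto simp: less_mult_imp_div_less mult.commute)
  have mod: "a mod ?D < ?D" "b mod ?D < ?D" using d by auto
  have digits: "c + d ^ (2 * N + 1) * y = c mod ?D + ?D * (c div ?D + d * y)" for c y
    by (simp add: algebra_simps)
  have lt: "x + d ^ (2 * N + 1) * y < d ^ (2 * Suc N)" if "x < d ^ (2 * N + 1)" "y < d" for x y
    using mixed_radix_index_less[OF that] by (simp add: mult_ac)
  have "marg d (2 * Suc N) 0 (2 * N + 1) (delay_process d (Suc N)) $$ (a, b)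
      = (\<Sum>y<d. delay_process d (Suc N) $$ (a + d ^ (2 * N + 1) * y, b + d ^ (2 * N + 1) * y))"
    using ab by (simp add: marg_index)
  also have "\<dots> = complex_of_real (\<Sum>y<d. delay_entry d (Suc N) (a + d ^ (2 * N + 1) * y) (b + d ^ (2 * N + 1) * y))"
    using ab lt by (simp add: delay_process_def)
  also have "(\<Sum>y<d. delay_entry d (Suc N) (a + d ^ (2 * N + 1) * y) (b + d ^ (2 * N + 1) * y))
      = (\<Sum>y<d. delay_entry d (Suc N) (a mod ?D + ?D * (a div ?D + d * y)) (b mod ?D + ?D * (b div ?D + d * y)))"
    by (simp only: digits)
  also have "\<dots> = (if a div ?D = b div ?D then delay_entry d N (a mod ?D) (b mod ?D) / real d else 0)"
    by (rule delay_entry_sum_last_output[OF N d mod div])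
  also have "complex_of_real \<dots> = tensor_maxmixed d (2 * N) (delay_process d N) $$ (a, b)"
    using ab mod by (simp add: tensor_maxmixed_def delay_process_def)
  finally show "marg d (2 * Suc N) 0 (2 * N + 1) (delay_process d (Suc N)) $$ (a, b)
      = tensor_maxmixed d (2 * N) (delay_process d N) $$ (a, b)" .
qed (auto simp: tensor_maxmixed_def marg_def)

lemma delay_process_causal_first:
  assumes n: "n \<ge> 1" and d: "d > 0"
  shows "marg d (2 * n) 0 1 (delay_process d n) = tensor_maxmixed d 0 (marg d (2 * n) 0 0 (delay_process d n))"
proof (rule eq_matI)
  fix a b assume "a < dim_row (tensor_maxmixed d 0 (marg d (2 * n) 0 0 (delay_process d n)))"
    "b < dim_col (tensor_maxmixed d 0 (marg d (2 * n) 0 0 (delay_process d n)))"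
  then have ab: "a < d" "b < d" by (auto simp: tensor_maxmixed_def)
  have "marg d (2 * n) 0 1 (delay_process d n) = marg d 2 0 1 (marg d (2 * n) 0 2 (delay_process d n))"
    by (rule marg_marg_prefix[symmetric]) (use n in auto)
  also have "marg d (2 * n) 0 2 (delay_process d n) = delay_process d 1"
    using delay_process_marg_prefix[of 1 n d] n d by simp
  finally have "marg d (2 * n) 0 1 (delay_process d n) $$ (a, b) = (\<Sum>y<d. delay_process d 1 $$ (a + d * y, b + d * y))"
    using ab by (simp add: marg_index)
  also have "\<dots> = (\<Sum>y<d. complex_of_real (if a = b then 1 / real d ^ 2 else 0))"
    using ab mixed_radix_index_less[of _ d _ d]
    by (intro sum.cong refl) (simp add: delay_process_def delay_entry_one[OF d, unfolded One_nat_def] power2_eq_square)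
  also have "\<dots> = (if a = b then complex_of_real (1 / real d) else 0)"
    using d by (simp add: power2_eq_square)
  also have "\<dots> = tensor_maxmixed d 0 (marg d (2 * n) 0 0 (delay_process d n)) $$ (a, b)"
    using ab delay_entry_trace[OF n d] by (simp add: tensor_maxmixed_def marg_index delay_process_def flip: of_real_sum)
  finally show "marg d (2 * n) 0 1 (delay_process d n) $$ (a, b)
      = tensor_maxmixed d 0 (marg d (2 * n) 0 0 (delay_process d n)) $$ (a, b)" .
qed (auto simp: tensor_maxmixed_def marg_def)

lemma delay_process_marg_pair:
  assumes j: "1 \<le> j" and d: "d > 0"
  shows "marg d (2 * j) (2 * j - 2) 2 (delay_process d j) = maxmixed (d ^ 2)"
proof (rule eq_matI)
  fix a b assume "a < dim_row (maxmixed (d ^ 2))" "b < dim_col (maxmixed (d ^ 2))"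
  then have ab: "a < d * d" "b < d * d" by (auto simp: maxmixed_def power2_eq_square)
  show "marg d (2 * j) (2 * j - 2) 2 (delay_process d j) $$ (a, b) = maxmixed (d ^ 2) $$ (a, b)"
  proof (cases "j = 1")
    case True
    then show ?thesis
      using ab d by (simp add: marg_index delay_process_def maxmixed_def delay_entry_one[OF d, unfolded One_nat_def]
          power2_eq_square)
  next
    case False
    then obtain N where jN: "j = Suc N" and N: "N \<ge> 1" using j by (cases j) auto
    have lt: "x + d ^ (2 * N) * c < d ^ (2 * Suc N)" if "x < d ^ (2 * N)" "c < d * d" for x c
      using mixed_radix_index_less[OF that] by (simp add: power_add mult_ac)
    show ?thesis
      using ab lt delay_entry_sum_prefix[OF N d ab] unfolding jN
      by (simp add: marg_index delay_process_def maxmixed_def power2_eq_square flip: of_real_sum)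
  qed
qed (auto simp: maxmixed_def marg_def)

lemma process_tensor_delay_process:
  assumes n: "n \<ge> 1" and d: "d > 0"
  shows "process_tensor d n (delay_process d n)"
  unfolding process_tensor_def
proof (intro conjI ballI)
  show "density_op (d ^ (2 * n)) (delay_process d n)" by (rule delay_process_state(1)[OF n d])
  fix j assume j: "j \<in> {1..n}"
  show "marg d (2 * n) 0 (2 * j - 1) (delay_process d n)
      = tensor_maxmixed d (2 * j - 2) (marg d (2 * n) 0 (2 * j - 2) (delay_process d n))"
  proof (cases "j = 1")
    case False
    then obtain N where jN: "j = Suc N" and N: "N \<ge> 1" using j by (cases j) auto
    have "marg d (2 * n) 0 (2 * j - 1) (delay_process d n)
        = marg d (2 * j) 0 (2 * j - 1) (marg d (2 * n) 0 (2 * j) (delay_process d n))"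
      by (rule marg_marg_prefix[symmetric]) (use j in auto)
    also have "marg d (2 * n) 0 (2 * j) (delay_process d n) = delay_process d j"
      by (rule delay_process_marg_prefix) (use j d in auto)
    also have "marg d (2 * j) 0 (2 * j - 1) (delay_process d j) = tensor_maxmixed d (2 * N) (delay_process d N)"
      unfolding jN using delay_process_causal[OF N d] by simp
    also have "delay_process d N = marg d (2 * n) 0 (2 * j - 2) (delay_process d n)"
      using delay_process_marg_prefix[of N n d] N j jN d by simp
    finally show ?thesis using jN by simp
  qed (use delay_process_causal_first[OF n d] in simp)
qed

lemma non_markovianity_delay_process:
  assumes n: "n \<ge> 1" and d: "d > 0"
  shows "non_markovianity d n (delay_process d n) = 2 * (real n - 1) * ln (real d)"
proof -
  have "vn_entropy (marg d (2 * n) (2 * j - 2) 2 (delay_process d n)) = 2 * ln (real d)" if j: "j \<in> {1..n}" for j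
  proof -
    have "marg d (2 * n) (2 * j - 2) 2 (delay_process d n)
        = marg d (2 * j - 2 + 2) (2 * j - 2) 2 (marg d (2 * n) 0 (2 * j - 2 + 2) (delay_process d n))"
      by (rule marg_via_prefix) (use j in auto)
    also have "2 * j - 2 + 2 = 2 * j" using j by auto
    also have "marg d (2 * n) 0 (2 * j) (delay_process d n) = delay_process d j"
      by (rule delay_process_marg_prefix) (use j d in auto)
    finally show ?thesis
      using delay_process_marg_pair[of j d] maxmixed_state(2)[of "d ^ 2"] j d by (simp add: ln_realpow)
  qed
  then show ?thesis
    using delay_process_state(2)[OF n d] by (simp add: non_markovianity_def algebra_simps)
qed

theorem theorem1:
  fixes n d :: nat
  assumes "n \<ge> 1" and "d \<ge> 2"
  shows "(\<forall>U. process_tensor d n U \<longrightarrow>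
            non_markovianity d n U \<le> 2 * (real n - 1) * ln (real d))
       \<and> (\<exists>U. process_tensor d n U \<and>
            non_markovianity d n U = 2 * (real n - 1) * ln (real d))"
proof -
  have d: "d > 0" using assms(2) by simp
  show ?thesis
    using non_markovianity_le[OF assms(1) d] process_tensor_delay_process[OF assms(1) d]
      non_markovianity_delay_process[OF assms(1) d] by blast
qed

end
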